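(* Let $H_1,\dots,H_n$ be null hypotheses indexed by $\mathcal V=\{1,\dots,n\}$ with observed $p$-values $p_1,\dots,p_n$; let $\bar{\mathcal S}=\{v:H_v\text{ true}\}$ and $\mathcal S=\mathcal V\setminus\bar{\mathcal S}$. Let $\mathcal G$ be a directed acyclic graph on $\mathcal V$ such that if $H_v$ is false then $H_w$ is false for every ancestor $w$ of $v$. For each $v$ let $\mathcal C_v$ be $v$ together with all of its descendants. Assume that the null $p$-values are uniformly distributed on $[0,1]$, mutually independent, and independent of all nonnull $p$-values. For each $v$ let $G_v:\mathbb R\to\mathbb R$ be monotone increasing, let $k_v\in[1,|\mathcal C_v|]$ be an integer, and let \[f_v(p_{\mathcal C_v})=G_v\big(p_{\mathcal C_v,(k_v)}\big),\] where $p_{\mathcal C_v,(1)}\le\dots\le p_{\mathcal C_v,(|\mathcal C_v|)}$ are the order statistics of $p_{\mathcal C_v}$. Define $\tilde p_v=F_v(f_v(p_{\mathcal C_v}))$ with $F_v(t)=\Pr(f_v(u_{\mathcal C_v})\le t)$, $u_{\mathcal C_v}$ i.i.d. $\mathrm{Uniform}[0,1]$. Then $(\tilde p_v)_{v\in\mathcal V}$ satisfies PRDS on $\bar{\mathcal S}$.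
   Context: For $x,y\in\mathbb R^m$, $x\preceq y$ means $x_i\le y_i$ for all $i$. A set $D\subset\mathbb R^m$ is non-decreasing if $x\preceq y$ and $x\in D$ imply $y\in D$. A random vector $X\in\mathbb R^m$ satisfies PRDS on $T\subset\{1,\dots,m\}$ if $t\mapsto\Pr(X\in D\mid X_i=t)$ is non-decreasing for every non-decreasing set $D$ and every $i\in T$. *)

theory Defs
  imports "HOL-Probability.Probability"
begin

text \<open>Hypotheses are indexed by V = {..<n} (0-based). The DAG is an edge relation
  E on V; (v,w) in E means an edge v -> w; w is a descendant of v iff (v,w) in E^+.\<close>

definition desc_closure :: "(nat \<times> nat) set \<Rightarrow> nat \<Rightarrow> nat set" where
  "desc_closure E v = {v} \<union> {w. (v, w) \<in> E\<^sup>+}"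

text \<open>k-th order statistic (1-based) of the values of u on the finite set C.\<close>
definition kth_smallest :: "nat \<Rightarrow> nat set \<Rightarrow> (nat \<Rightarrow> real) \<Rightarrow> real" where
  "kth_smallest k C u = sort (map u (sorted_list_of_set C)) ! (k - 1)"

definition f_stat :: "(nat \<times> nat) set \<Rightarrow> (nat \<Rightarrow> real \<Rightarrow> real) \<Rightarrow> (nat \<Rightarrow> nat)
    \<Rightarrow> nat \<Rightarrow> (nat \<Rightarrow> real) \<Rightarrow> real" where
  "f_stat E G k v u = G v (kth_smallest (k v) (desc_closure E v) u)"

definition F_cdf :: "(nat \<times> nat) set \<Rightarrow> (nat \<Rightarrow> real \<Rightarrow> real) \<Rightarrow> (nat \<Rightarrow> nat)
    \<Rightarrow> nat \<Rightarrow> real \<Rightarrow> real" where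
  "F_cdf E G k v t =
     measure (PiM (desc_closure E v) (\<lambda>_. uniform_measure lborel {0..1}))
       {u \<in> space (PiM (desc_closure E v) (\<lambda>_. uniform_measure lborel {0..1})).
          f_stat E G k v u \<le> t}"

definition tilde_p :: "(nat \<times> nat) set \<Rightarrow> (nat \<Rightarrow> real \<Rightarrow> real) \<Rightarrow> (nat \<Rightarrow> nat)
    \<Rightarrow> nat \<Rightarrow> (nat \<Rightarrow> real) \<Rightarrow> real" where
  "tilde_p E G k v x = F_cdf E G k v (f_stat E G k v x)"

definition nondecreasing_set :: "nat set \<Rightarrow> (nat \<Rightarrow> real) set \<Rightarrow> bool" where
  "nondecreasing_set I D \<longleftrightarrow> D \<subseteq> (\<Pi>\<^sub>E i\<in>I. UNIV) \<and>
     (\<forall>x\<in>D. \<forall>y\<in>(\<Pi>\<^sub>E i\<in>I. UNIV). (\<forall>i\<in>I. x i \<le> y i) \<longrightarrow> y \<in> D)"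

text \<open>PRDS on T of the random vector (X i)_{i in I} under M: for every (measurable)
  non-decreasing set D and every i in T, the conditional probability
  Pr(X in D | X_i = t) admits a version g that is non-decreasing in t, i.e.
  Pr(X in D, X_i in B) = E[1_B(X_i) g(X_i)] for all Borel B.\<close>
definition PRDS :: "'a measure \<Rightarrow> nat set \<Rightarrow> (nat \<Rightarrow> 'a \<Rightarrow> real) \<Rightarrow> nat set \<Rightarrow> bool" where
  "PRDS M I X T \<longleftrightarrow>
    (\<forall>D. nondecreasing_set I D \<and> D \<in> sets (PiM I (\<lambda>_. borel)) \<longrightarrow>
      (\<forall>i\<in>T. \<exists>g :: real \<Rightarrow> real. mono g \<and> g \<in> borel_measurable borel \<and>
         (\<forall>B\<in>sets borel.
            measure M {\<omega> \<in> space M. (\<lambda>j\<in>I. X j \<omega>) \<in> D \<and> X i \<omega> \<in> B}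
              = (\<integral>\<omega>. indicator B (X i \<omega>) * g (X i \<omega>) \<partial>M))))"

end

theory Submission
  imports Defs
begin

text \<open>Fix a null hypothesis \<open>i\<close> and let \<open>C\<close> be \<open>i\<close> together with its descendants. By the
  hierarchy assumption every hypothesis in \<open>C\<close> is null, so the \<open>p\<close>-values on \<open>C\<close> are
  independent uniforms, independent of all other \<open>p\<close>-values, and the adjusted \<open>p\<close>-value of \<open>i\<close>
  is a nondecreasing function \<open>H\<close> of their \<open>k\<close>-th order statistic \<open>Z\<close>. For an upper set \<open>D\<close>
  the event that the vector of adjusted \<open>p\<close>-values lies in \<open>D\<close> is increasing in every
  \<open>p\<close>-value, so integrating out the coordinates outside \<open>C\<close> leaves a nondecreasing function
  \<open>\<psi>\<close> of the \<open>p\<close>-values on \<open>C\<close>. Given \<open>Z = z\<close>, the other coordinates on \<open>C\<close> are independent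
  uniforms, \<open>k - 1\<close> of them on \<open>(0,z)\<close> and the rest on \<open>(z,1)\<close>; this family increases
  stochastically with \<open>z\<close>, so \<open>E[\<psi> | Z = z]\<close> is nondecreasing in \<open>z\<close>. Conditioning further on
  \<open>H(Z)\<close> preserves monotonicity because the law of \<open>Z\<close> charges every subinterval of \<open>(0,1)\<close>.\<close>

section \<open>Order statistics\<close>

lemma card_sorted_values_le:
  fixes u :: "nat \<Rightarrow> real"
  assumes "finite C"
  defines "ys \<equiv> sort (map u (sorted_list_of_set C))"
  shows "card {i. i < length ys \<and> ys ! i \<le> t} = card {l\<in>C. u l \<le> t}"
proof -
  have "card {i. i < length ys \<and> ys ! i \<le> t} = length (filter (\<lambda>x. x \<le> t) ys)"
    by (simp add: length_filter_conv_card)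
  also have "\<dots> = length (filter (\<lambda>x. x \<le> t) (map u (sorted_list_of_set C)))"
    unfolding ys_def by (metis filter_sort length_sort)
  also have "\<dots> = card ({l. u l \<le> t} \<inter> C)"
    using assms(1) by (simp add: distinct_length_filter comp_def)
  finally show ?thesis by (simp add: Collect_conj_eq Int_commute)
qed

lemma kth_smallest_le_iff:
  assumes C: "finite C" and k: "1 \<le> k" "k \<le> card C"
  shows "kth_smallest k C u \<le> t \<longleftrightarrow> k \<le> card {l\<in>C. u l \<le> t}"
proof -
  define ys where "ys = sort (map u (sorted_list_of_set C))"
  have len: "length ys = card C" unfolding ys_def using C by simp
  have srt: "sorted ys" unfolding ys_def by simp
  have cnt: "card {l\<in>C. u l \<le> t} = card {i. i < length ys \<and> ys ! i \<le> t}"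
    unfolding ys_def by (rule card_sorted_values_le[OF C, symmetric])
  have kth: "kth_smallest k C u = ys ! (k - 1)" unfolding kth_smallest_def ys_def ..
  show ?thesis
  proof
    assume le: "kth_smallest k C u \<le> t"
    have "{..<k} \<subseteq> {i. i < length ys \<and> ys ! i \<le> t}"
    proof
      fix i assume "i \<in> {..<k}"
      then have "i \<le> k - 1" "k - 1 < length ys" using k len by auto
      then show "i \<in> {i. i < length ys \<and> ys ! i \<le> t}"
        using le kth sorted_nth_mono[OF srt] by (auto intro: order_trans)
    qed
    from card_mono[OF _ this] show "k \<le> card {l\<in>C. u l \<le> t}" using cnt by simp
  next
    assume ge: "k \<le> card {l\<in>C. u l \<le> t}"
    show "kth_smallest k C u \<le> t"
    proof (rule ccontr)
      assume "\<not> ?thesis"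
      then have gt: "t < ys ! (k - 1)" using kth by simp
      have "{i. i < length ys \<and> ys ! i \<le> t} \<subseteq> {..<k-1}"
      proof
        fix i assume i: "i \<in> {i. i < length ys \<and> ys ! i \<le> t}"
        show "i \<in> {..<k-1}"
        proof (rule ccontr)
          assume "i \<notin> {..<k-1}"
          then have "ys ! (k-1) \<le> ys ! i" using i sorted_nth_mono[OF srt] by auto
          then show False using i gt by auto
        qed
      qed
      from card_mono[OF _ this] have "card {i. i < length ys \<and> ys ! i \<le> t} \<le> k - 1" by simp
      then show False using ge cnt k by simp
    qed
  qed
qed

lemma kth_smallest_mono:
  assumes C: "finite C" and k: "1 \<le> k" "k \<le> card C" and le: "\<And>l. l \<in> C \<Longrightarrow> x l \<le> y l"
  shows "kth_smallest k C x \<le> kth_smallest k C y"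
proof -
  let ?Y = "kth_smallest k C y"
  have "k \<le> card {l\<in>C. y l \<le> ?Y}" using kth_smallest_le_iff[OF C k, of y ?Y] by simp
  also have "\<dots> \<le> card {l\<in>C. x l \<le> ?Y}"
    using C le by (intro card_mono) (auto intro: order_trans)
  finally show ?thesis using kth_smallest_le_iff[OF C k] by simp
qed

lemma kth_smallest_cong:
  assumes "\<And>l. l \<in> C \<Longrightarrow> x l = y l"
  shows "kth_smallest k C x = kth_smallest k C y"
proof (cases "finite C")
  case True
  then have "map x (sorted_list_of_set C) = map y (sorted_list_of_set C)"
    using assms by (intro map_cong) auto
  then show ?thesis unfolding kth_smallest_def by (rule arg_cong[where f="\<lambda>l. sort l ! (k - 1)"])
qed (simp add: kth_smallest_def)

lemma kth_smallest_eqI: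
  assumes C: "finite C" and k: "1 \<le> k" "k \<le> card C" and j: "j \<in> C"
    and lt: "card {l\<in>C. u l < u j} \<le> k - 1" and le: "k \<le> card {l\<in>C. u l \<le> u j}"
  shows "kth_smallest k C u = u j"
proof -
  let ?y = "kth_smallest k C u"
  have a: "?y \<le> u j" using kth_smallest_le_iff[OF C k] le by simp
  have "\<not> ?y < u j"
  proof
    assume y: "?y < u j"
    have "k \<le> card {l\<in>C. u l \<le> ?y}" using kth_smallest_le_iff[OF C k, of u ?y] by simp
    also have "\<dots> \<le> card {l\<in>C. u l < u j}" using C y by (intro card_mono) auto
    finally show False using lt k by simp
  qed
  with a show ?thesis by simp
qed

lemma kth_smallest_attained:
  assumes C: "finite C" and k: "1 \<le> k" "k \<le> card C"
  obtains j where "j \<in> C" "kth_smallest k C u = u j" "card {l\<in>C. u l < u j} \<le> k - 1"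
proof -
  let ?y = "kth_smallest k C u"
  define A where "A = {l\<in>C. u l < ?y}"
  have le: "k \<le> card {l\<in>C. u l \<le> ?y}" using kth_smallest_le_iff[OF C k, of u ?y] by simp
  have cA: "card A \<le> k - 1"
  proof (rule ccontr)
    assume "\<not> ?thesis"
    then have kA: "k \<le> card A" by simp
    then have ne: "A \<noteq> {}" using k by auto
    have fA: "finite A" using C A_def by simp
    define t where "t = Max (u ` A)"
    have tlt: "t < ?y" unfolding t_def using fA ne A_def by (subst Max_less_iff) auto
    have "A \<subseteq> {l\<in>C. u l \<le> t}" unfolding t_def using fA A_def by auto
    then have "k \<le> card {l\<in>C. u l \<le> t}" using kA card_mono[of "{l\<in>C. u l \<le> t}" A] C by simp
    then have "?y \<le> t" using kth_smallest_le_iff[OF C k] by simp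
    then show False using tlt by simp
  qed
  have "\<not> {l\<in>C. u l \<le> ?y} \<subseteq> A"
  proof
    assume "{l\<in>C. u l \<le> ?y} \<subseteq> A"
    then have "card {l\<in>C. u l \<le> ?y} \<le> card A" using C A_def by (intro card_mono) auto
    then show False using le cA k by simp
  qed
  then obtain j where j: "j \<in> C" "u j = ?y" unfolding A_def by force
  then show ?thesis using cA A_def that by (auto simp: j(2))
qed

lemma borel_measurable_kth_smallest:
  assumes C: "finite C" and k: "1 \<le> k" "k \<le> card C"
    and X: "\<And>l. l \<in> C \<Longrightarrow> (\<lambda>w. X l w) \<in> borel_measurable M"
  shows "(\<lambda>w. kth_smallest k C (\<lambda>l. X l w)) \<in> borel_measurable M"
proof (subst borel_measurable_iff_le, intro allI)
  fix a
  have "{w \<in> space M. kth_smallest k C (\<lambda>l. X l w) \<le> a}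
      = {w \<in> space M. real k \<le> (\<Sum>l\<in>C. indicator {..a} (X l w))}"
  proof -
    have "\<And>w. (\<Sum>l\<in>C. indicator {..a} (X l w) :: real) = real (card {l\<in>C. X l w \<le> a})"
      using C by (simp add: indicator_def sum.If_cases Int_def)
    then show ?thesis using kth_smallest_le_iff[OF C k] by auto
  qed
  also have "\<dots> \<in> sets M"
    using X by measurable
  finally show "{w \<in> space M. kth_smallest k C (\<lambda>l. X l w) \<le> a} \<in> sets M" .
qed

section \<open>Products of uniform distributions\<close>

abbreviation U01 :: "real measure" where "U01 \<equiv> uniform_measure lborel {0..1::real}"

abbreviation U01_cube :: "nat set \<Rightarrow> (nat \<Rightarrow> real) measure" where
  "U01_cube C \<equiv> PiM C (\<lambda>_. U01)"

lemma sets_U01[measurable_cong]: "sets U01 = sets borel" by simp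
lemma space_U01[simp]: "space U01 = UNIV" by simp

lemma prob_space_U01: "prob_space U01"
  by (rule prob_space_uniform_measure) auto

lemma prob_space_U01_cube: "prob_space (U01_cube C)"
  by (rule prob_space_PiM) (simp add: prob_space_U01)

interpretation U01_product: product_prob_space "\<lambda>_::nat. U01" UNIV
  by (simp add: product_prob_space_def product_prob_space_axioms_def prob_space_U01
      product_sigma_finite_def prob_space_imp_sigma_finite)

lemma nn_integral_U01:
  assumes [measurable]: "f \<in> borel_measurable borel"
  shows "(\<integral>\<^sup>+x. f x \<partial>U01) = (\<integral>\<^sup>+x. f x * indicator {0..1} x \<partial>lborel)"
  by (subst nn_integral_uniform_measure) (auto simp: mult.commute divide_ennreal_def)

lemma AE_U01_interior: "AE x in U01. 0 < x \<and> x < 1"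
proof -
  have "AE x in lborel. (x::real) \<noteq> 0 \<and> x \<noteq> 1"
    by (intro AE_conjI AE_lborel_singleton)
  then have "AE x in lborel. (x::real) \<in> {0..1} \<longrightarrow> 0 < x \<and> x < 1"
    by (rule eventually_mono) (auto simp: less_le)
  then show ?thesis
    by (subst AE_uniform_measure) auto
qed

lemma AE_U01_neq: "AE y in U01. y \<noteq> c"
proof -
  have "AE y in lborel. (y::real) \<in> {0..1} \<longrightarrow> y \<noteq> c"
    using AE_lborel_singleton[of c] by (rule eventually_mono) auto
  then show ?thesis by (subst AE_uniform_measure) auto
qed

lemma nn_integral_U01_interval:
  fixes a b :: real
  assumes ab: "0 \<le> a" "0 < b" "a + b \<le> 1" and f[measurable]: "f \<in> borel_measurable borel"
  shows "(\<integral>\<^sup>+x. indicator {a<..<a+b} x * f x \<partial>U01) = ennreal b * (\<integral>\<^sup>+x. f (a + b * x) \<partial>U01)"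
proof -
  have "(\<integral>\<^sup>+x. indicator {a<..<a+b} x * f x \<partial>U01) = (\<integral>\<^sup>+x. indicator {a<..<a+b} x * f x \<partial>lborel)"
    using ab by (subst nn_integral_U01) (auto intro!: nn_integral_cong simp: indicator_def)
  also have "\<dots> = ennreal b * (\<integral>\<^sup>+x. indicator {a<..<a+b} (a + b * x) * f (a + b * x) \<partial>lborel)"
    using ab by (subst nn_integral_real_affine[where c=b and t=a]) auto
  also have "(\<integral>\<^sup>+x. indicator {a<..<a+b} (a + b * x) * f (a + b * x) \<partial>lborel)
      = (\<integral>\<^sup>+x. f (a + b * x) * indicator {0..1} x \<partial>lborel)"
  proof (rule nn_integral_cong_AE)
    show "AE x in lborel. indicator {a<..<a+b} (a + b * x) * f (a + b * x) = f (a + b * x) * indicator {0..1} x"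
      using AE_lborel_singleton[of "0::real"] AE_lborel_singleton[of "1::real"]
    proof eventually_elim
      case (elim x)
      have "(a < a + b * x \<and> a + b * x < a + b) \<longleftrightarrow> (0 < x \<and> x < 1)"
        using ab by (auto simp: mult_less_cancel_left_pos zero_less_mult_iff)
      then show ?case using elim by (auto simp: indicator_def)
    qed
  qed
  also have "\<dots> = (\<integral>\<^sup>+x. f (a + b * x) \<partial>U01)"
    by (subst nn_integral_U01) auto
  finally show ?thesis .
qed

lemma nn_integral_U01_cube_box:
  fixes a b :: "nat \<Rightarrow> real" and f :: "(nat \<Rightarrow> real) \<Rightarrow> ennreal"
  assumes I: "finite I" and ab: "\<And>l. l \<in> I \<Longrightarrow> 0 \<le> a l \<and> 0 < b l \<and> a l + b l \<le> 1"
    and f: "f \<in> borel_measurable (PiM I (\<lambda>_. borel))"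
  shows "(\<integral>\<^sup>+x. (\<Prod>l\<in>I. indicator {a l<..<a l + b l} (x l)) * f x \<partial>U01_cube I)
       = ennreal (\<Prod>l\<in>I. b l) * (\<integral>\<^sup>+x. f (\<lambda>l\<in>I. a l + b l * x l) \<partial>U01_cube I)"
  using I ab f
proof (induction I arbitrary: f rule: finite_induct)
  case empty
  show ?case
    by (simp add: PiM_empty nn_integral_count_space_finite)
next
  case (insert i I)
  note fm[measurable] = insert.prems(2)
  have fm': "f \<in> borel_measurable (U01_cube (insert i I))"
    using fm by (simp cong: measurable_cong_sets)
  have abi: "0 \<le> a i" "0 < b i" "a i + b i \<le> 1" using insert.prems(1) by auto
  define g where "g x = (\<integral>\<^sup>+y. f (x(i := a i + b i * y)) \<partial>U01)" for x
  have gm[measurable]: "g \<in> borel_measurable (PiM I (\<lambda>_. borel))"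
    unfolding g_def by measurable
  let ?box = "\<lambda>J x. (\<Prod>l\<in>J. indicator {a l<..<a l + b l} (x l)) :: ennreal"
  have "(\<integral>\<^sup>+x. ?box (insert i I) x * f x \<partial>U01_cube (insert i I))
      = (\<integral>\<^sup>+x. (\<integral>\<^sup>+y. ?box (insert i I) (x(i:=y)) * f (x(i:=y)) \<partial>U01) \<partial>U01_cube I)"
    by (rule U01_product.product_nn_integral_insert) (use insert in \<open>auto\<close>)
  also have "\<dots> = (\<integral>\<^sup>+x. ?box I x * (ennreal (b i) * g x) \<partial>U01_cube I)"
  proof (rule nn_integral_cong)
    fix x assume x: "x \<in> space (U01_cube I)"
    have e: "\<And>y. ?box (insert i I) (x(i:=y)) = indicator {a i<..<a i + b i} y * ?box I x"
      using insert.hyps by (simp add: prod.insert) (intro arg_cong2[where f="(*)"] refl prod.cong, auto)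
    have m[measurable]: "(\<lambda>y. f (x(i := y))) \<in> borel_measurable borel"
      using measurable_comp[OF measurable_component_update[OF x insert.hyps(2)] fm']
      by (simp add: comp_def cong: measurable_cong_sets)
    have "(\<integral>\<^sup>+y. ?box (insert i I) (x(i:=y)) * f (x(i:=y)) \<partial>U01)
        = ?box I x * (\<integral>\<^sup>+y. indicator {a i<..<a i + b i} y * f (x(i:=y)) \<partial>U01)"
      unfolding e by (subst nn_integral_cmult[symmetric]) (auto intro!: nn_integral_cong simp: mult_ac)
    also have "(\<integral>\<^sup>+y. indicator {a i<..<a i + b i} y * f (x(i:=y)) \<partial>U01) = ennreal (b i) * g x"
      unfolding g_def using nn_integral_U01_interval[OF abi m] by simp
    finally show "(\<integral>\<^sup>+y. ?box (insert i I) (x(i:=y)) * f (x(i:=y)) \<partial>U01)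
        = ?box I x * (ennreal (b i) * g x)" .
  qed
  also have "\<dots> = ennreal (b i) * (\<integral>\<^sup>+x. ?box I x * g x \<partial>U01_cube I)"
    by (subst nn_integral_cmult[symmetric]) (auto intro!: nn_integral_cong simp: mult_ac)
  also have "\<dots> = ennreal (b i) * (ennreal (\<Prod>l\<in>I. b l) * (\<integral>\<^sup>+x. g (\<lambda>l\<in>I. a l + b l * x l) \<partial>U01_cube I))"
    by (subst insert.IH[OF _ gm]) (use insert.prems(1) in auto)
  also have "(\<integral>\<^sup>+x. g (\<lambda>l\<in>I. a l + b l * x l) \<partial>U01_cube I)
      = (\<integral>\<^sup>+x. (\<integral>\<^sup>+y. f (\<lambda>l\<in>insert i I. a l + b l * (x(i:=y)) l) \<partial>U01) \<partial>U01_cube I)"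
  proof (rule nn_integral_cong)
    fix x
    have "\<And>y. (\<lambda>l\<in>I. a l + b l * x l)(i := a i + b i * y) = (\<lambda>l\<in>insert i I. a l + b l * (x(i:=y)) l)"
      using insert.hyps by (auto simp: fun_eq_iff)
    then show "g (\<lambda>l\<in>I. a l + b l * x l) = (\<integral>\<^sup>+y. f (\<lambda>l\<in>insert i I. a l + b l * (x(i:=y)) l) \<partial>U01)"
      unfolding g_def by simp
  qed
  also have "\<dots> = (\<integral>\<^sup>+x. f (\<lambda>l\<in>insert i I. a l + b l * x l) \<partial>U01_cube (insert i I))"
    by (rule U01_product.product_nn_integral_insert[symmetric]) (use insert in \<open>auto\<close>)
  finally have *: "(\<integral>\<^sup>+x. ?box (insert i I) x * f x \<partial>U01_cube (insert i I))
     = ennreal (b i) * (ennreal (\<Prod>l\<in>I. b l) * (\<integral>\<^sup>+x. f (\<lambda>l\<in>insert i I. a l + b l * x l) \<partial>U01_cube (insert i I)))" .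
  have "0 \<le> b i" "0 \<le> prod b I" using insert.prems(1) by (auto intro!: prod_nonneg simp: less_imp_le)
  then show ?case
    using * by (simp only: prod.insert[OF insert.hyps] ennreal_mult mult.assoc)
qed

lemma AE_U01_cube_neq:
  assumes C: "finite C" and l: "l \<in> C" "l' \<in> C" "l \<noteq> l'"
  shows "AE u in U01_cube C. u l \<noteq> u l'"
proof -
  have cl: "C = insert l (C - {l})" using l by auto
  have "(\<lambda>u. u l) \<in> borel_measurable (U01_cube C)" "(\<lambda>u. u l') \<in> borel_measurable (U01_cube C)"
    using l by (simp_all cong: measurable_cong_sets)
  from borel_measurable_eq[OF this] have eq_sets: "{u \<in> space (U01_cube C). u l = u l'} \<in> sets (U01_cube C)" .
  have "(\<integral>\<^sup>+u. indicator {u. u l = u l'} u \<partial>U01_cube C)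
    = (\<integral>\<^sup>+x. (\<integral>\<^sup>+y. indicator {u. u l = u l'} (x(l:=y)) \<partial>U01) \<partial>U01_cube (C - {l}))"
  proof -
    have "{u. u l = u l'} \<inter> space (U01_cube C) \<in> sets (U01_cube C)"
      using eq_sets by (simp add: Int_commute Collect_conj_eq)
    then have "(\<lambda>u. indicator {u. u l = u l'} u :: ennreal) \<in> borel_measurable (U01_cube (insert l (C - {l})))"
      unfolding cl[symmetric] by (simp add: borel_measurable_indicator_iff)
    then show ?thesis
      using U01_product.product_nn_integral_insert[of "C - {l}" l] C cl by simp
  qed
  also have "\<dots> = (\<integral>\<^sup>+x. 0 \<partial>U01_cube (C - {l}))"
  proof (rule nn_integral_cong)
    fix x
    have "(\<integral>\<^sup>+y. indicator {u. u l = u l'} (x(l:=y)) \<partial>U01) = (\<integral>\<^sup>+y. indicator {x l'} y \<partial>U01)"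
      using l by (intro nn_integral_cong) (auto simp: indicator_def)
    also have "\<dots> = 0"
      using AE_U01_neq[of "x l'"]
      by (subst nn_integral_0_iff_AE) (auto simp: indicator_def cong: measurable_cong_sets)
    finally show "(\<integral>\<^sup>+y. indicator {u. u l = u l'} (x(l:=y)) \<partial>U01) = 0" .
  qed
  finally have "(\<integral>\<^sup>+u. indicator {u. \<not> u l \<noteq> u l'} u \<partial>U01_cube C) = 0" by simp
  moreover have "{u \<in> space (U01_cube C). u l \<noteq> u l'} \<in> sets (U01_cube C)"
    using sets.compl_sets[OF eq_sets]
    by (simp add: set_diff_eq) (metis (mono_tags, lifting) Collect_cong)
  ultimately show ?thesis
    by (subst AE_iff_nn_integral) auto
qed

lemma AE_U01_cube_generic:
  assumes C: "finite C"
  shows "AE u in U01_cube C. (\<forall>l\<in>C. 0 < u l \<and> u l < 1) \<and> (\<forall>l\<in>C. \<forall>l'\<in>C. l \<noteq> l' \<longrightarrow> u l \<noteq> u l')"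
proof (rule AE_conjI)
  show "AE u in U01_cube C. \<forall>l\<in>C. 0 < u l \<and> u l < 1"
  proof (rule AE_finite_allI[OF C])
    fix l assume l: "l \<in> C"
    show "AE u in U01_cube C. 0 < u l \<and> u l < 1"
      by (rule AE_PiM_component[OF _ l AE_U01_interior]) (simp add: prob_space_U01)
  qed
  have "AE u in U01_cube C. l \<noteq> l' \<longrightarrow> u l \<noteq> u l'" if "l \<in> C" "l' \<in> C" for l l'
    using AE_U01_cube_neq[OF C that] by (cases "l = l'") auto
  then show "AE u in U01_cube C. \<forall>l\<in>C. \<forall>l'\<in>C. l \<noteq> l' \<longrightarrow> u l \<noteq> u l'"
    by (intro AE_finite_allI[OF C])
qed

section \<open>Conditioning on the \<open>k\<close>-th order statistic\<close>

text \<open>Generic points of the cube satisfy exactly one \<open>rank_pattern C j S\<close> with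
  \<open>card S = k - 1\<close>, and then \<open>u j\<close> is the \<open>k\<close>-th smallest coordinate. Given the pattern and
  \<open>u j = z\<close>, the remaining coordinates are uniform on the cube transformed by \<open>stretch C j S z\<close>.\<close>

definition rank_pattern :: "nat set \<Rightarrow> nat \<Rightarrow> nat set \<Rightarrow> (nat \<Rightarrow> real) \<Rightarrow> bool" where
  "rank_pattern C j S u \<longleftrightarrow>
     (\<forall>l\<in>S. 0 < u l \<and> u l < u j) \<and> (\<forall>l\<in>C - {j} - S. u j < u l \<and> u l < 1)"

definition rank_patterns :: "nat set \<Rightarrow> nat \<Rightarrow> (nat \<times> nat set) set" where
  "rank_patterns C k = {(j, S). j \<in> C \<and> S \<subseteq> C - {j} \<and> card S = k - 1}"

definition stretch :: "nat set \<Rightarrow> nat \<Rightarrow> nat set \<Rightarrow> real \<Rightarrow> (nat \<Rightarrow> real) \<Rightarrow> nat \<Rightarrow> real" where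
  "stretch C j S z s = (\<lambda>l\<in>C. if l = j then z else if l \<in> S then z * s l else z + (1 - z) * s l)"

text \<open>\<open>cond_kth C k \<psi> z\<close> is \<open>card (rank_patterns C k)\<close> times the conditional expectation of
  \<open>\<psi>(u)\<close> given \<open>kth_smallest k C u = z\<close>, for \<open>u\<close> uniform on the cube.\<close>

definition cond_kth :: "nat set \<Rightarrow> nat \<Rightarrow> ((nat \<Rightarrow> real) \<Rightarrow> ennreal) \<Rightarrow> real \<Rightarrow> ennreal" where
  "cond_kth C k \<psi> z = (\<Sum>(j, S)\<in>rank_patterns C k. \<integral>\<^sup>+s. \<psi> (stretch C j S z s) \<partial>U01_cube (C - {j}))"

definition order_stat_weight :: "nat set \<Rightarrow> nat \<Rightarrow> real \<Rightarrow> real" where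
  "order_stat_weight C k z = z ^ (k - 1) * (1 - z) ^ (card C - k)"

lemma finite_rank_patterns: "finite C \<Longrightarrow> finite (rank_patterns C k)"
  by (rule finite_subset[of _ "C \<times> Pow C"]) (auto simp: rank_patterns_def)

lemma rank_patterns_nonempty:
  assumes C: "finite C" and k: "1 \<le> k" "k \<le> card C"
  shows "rank_patterns C k \<noteq> {}"
proof -
  obtain j where j: "j \<in> C" using k card_gt_0_iff by fastforce
  have "k - 1 \<le> card (C - {j})" using j C k by simp
  then obtain S where "S \<subseteq> C - {j}" "card S = k - 1" by (metis obtain_subset_with_card_n)
  then have "(j, S) \<in> rank_patterns C k" using j unfolding rank_patterns_def by auto
  then show ?thesis by auto
qed

lemma card_rank_patterns_pos:
  assumes "finite C" "1 \<le> k" "k \<le> card C"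
  shows "0 < card (rank_patterns C k)"
  using rank_patterns_nonempty[OF assms] finite_rank_patterns[OF assms(1)] by (simp add: card_gt_0_iff)

lemma measurable_rank_pattern[measurable]:
  assumes "finite C" "j \<in> C" "S \<subseteq> C - {j}"
  shows "Measurable.pred (PiM C (\<lambda>_. borel)) (rank_pattern C j S)"
proof -
  have "rank_pattern C j S = (\<lambda>u. \<forall>l\<in>C. (l \<in> S \<longrightarrow> 0 < u l \<and> u l < u j) \<and>
                                   (l \<notin> S \<and> l \<noteq> j \<longrightarrow> u j < u l \<and> u l < 1))"
    using assms unfolding rank_pattern_def by (auto simp: fun_eq_iff)
  also have "Measurable.pred (PiM C (\<lambda>_. borel)) \<dots>"
    using assms(1,2) by measurable
  finally show ?thesis .
qed

lemma measurable_stretch: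
  "(\<lambda>x. stretch C j S (fst x) (snd x)) \<in> measurable (borel \<Otimes>\<^sub>M U01_cube (C - {j})) (PiM C (\<lambda>_. borel))"
  unfolding stretch_def
proof (rule measurable_restrict)
  fix l assume l: "l \<in> C"
  show "(\<lambda>x. if l = j then fst x else if l \<in> S then fst x * snd x l else fst x + (1 - fst x) * snd x l)
      \<in> borel_measurable (borel \<Otimes>\<^sub>M U01_cube (C - {j}))"
  proof (cases "l = j")
    case False
    then have l': "l \<in> C - {j}" using l by auto
    have [measurable]: "(\<lambda>x. snd x l) \<in> borel_measurable (borel \<Otimes>\<^sub>M U01_cube (C - {j}))"
      using measurable_comp[OF measurable_snd measurable_component_singleton[OF l', of "\<lambda>_. U01"]]
      by (simp add: comp_def cong: measurable_cong_sets)
    show ?thesis using l False by (cases "l \<in> S") simp_all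
  qed simp
qed

lemma borel_measurable_nn_integral_stretch:
  assumes [measurable]: "\<psi> \<in> borel_measurable (PiM C (\<lambda>_. borel))"
  shows "(\<lambda>z. \<integral>\<^sup>+s. \<psi> (stretch C j S z s) \<partial>U01_cube (C - {j})) \<in> borel_measurable borel"
proof -
  interpret sigma_finite_measure "U01_cube (C - {j})"
    using prob_space_U01_cube by (simp add: prob_space_imp_sigma_finite)
  have "(\<lambda>x. \<psi> (stretch C j S (fst x) (snd x))) \<in> borel_measurable (borel \<Otimes>\<^sub>M U01_cube (C - {j}))"
    using measurable_comp[OF measurable_stretch assms] by (simp add: comp_def)
  then show ?thesis
    by (intro borel_measurable_nn_integral) (simp add: case_prod_beta')
qed

lemma borel_measurable_cond_kth:
  assumes "\<psi> \<in> borel_measurable (PiM C (\<lambda>_. borel))"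
  shows "cond_kth C k \<psi> \<in> borel_measurable borel"
  unfolding cond_kth_def
  by (intro borel_measurable_sum) (auto simp: case_prod_beta intro: borel_measurable_nn_integral_stretch[OF assms])

lemma prod_indicator_eq_indicator_Ball:
  "finite I \<Longrightarrow> (\<Prod>l\<in>I. indicator (A l) (x l) :: ennreal) = indicator {x. \<forall>l\<in>I. x l \<in> A l} x"
  by (induction I rule: finite_induct) (auto simp: indicator_def)

lemma nn_integral_rank_pattern:
  fixes \<psi> :: "(nat \<Rightarrow> real) \<Rightarrow> ennreal"
  assumes C: "finite C" and j: "j \<in> C" and S: "S \<subseteq> C - {j}"
    and \<psi>[measurable]: "\<psi> \<in> borel_measurable (PiM C (\<lambda>_. borel))" and A[measurable]: "A \<in> sets borel"
  shows "(\<integral>\<^sup>+u. indicator {u. rank_pattern C j S u} u * indicator A (u j) * \<psi> u \<partial>U01_cube C)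
    = (\<integral>\<^sup>+z. indicator A z * ennreal (z ^ card S * (1 - z) ^ card (C - {j} - S))
          * (\<integral>\<^sup>+s. \<psi> (stretch C j S z s) \<partial>U01_cube (C - {j})) \<partial>U01)"
proof -
  define C' where "C' = C - {j}"
  have CC: "C = insert j C'" "j \<notin> C'" "finite C'" using j C unfolding C'_def by auto
  have "(\<lambda>u. indicator {u. rank_pattern C j S u} u * indicator A (u j) * \<psi> u)
      \<in> borel_measurable (U01_cube (insert j C'))"
    using measurable_rank_pattern[OF C j S] j unfolding CC(1)[symmetric]
    by (simp cong: measurable_cong_sets) measurable
  then have "(\<integral>\<^sup>+u. indicator {u. rank_pattern C j S u} u * indicator A (u j) * \<psi> u \<partial>U01_cube C)
    = (\<integral>\<^sup>+z. (\<integral>\<^sup>+x. indicator {u. rank_pattern C j S u} (x(j:=z)) * indicator A z * \<psi> (x(j:=z))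
          \<partial>U01_cube C') \<partial>U01)"
    using U01_product.product_nn_integral_insert_rev[OF CC(3,2)] unfolding CC(1)[symmetric] by simp
  also have "\<dots> = (\<integral>\<^sup>+z. indicator A z * ennreal (z ^ card S * (1 - z) ^ card (C' - S))
          * (\<integral>\<^sup>+s. \<psi> (stretch C j S z s) \<partial>U01_cube C') \<partial>U01)"
  proof (rule nn_integral_cong_AE)
    show "AE z in U01. (\<integral>\<^sup>+x. indicator {u. rank_pattern C j S u} (x(j:=z)) * indicator A z * \<psi> (x(j:=z)) \<partial>U01_cube C')
       = indicator A z * ennreal (z ^ card S * (1 - z) ^ card (C' - S)) * (\<integral>\<^sup>+s. \<psi> (stretch C j S z s) \<partial>U01_cube C')"
      using AE_U01_interior
    proof eventually_elim
      case (elim z)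
      define a where "a l = (if l \<in> S then 0 else z)" for l
      define b where "b l = (if l \<in> S then z else 1 - z)" for l
      have ab: "\<And>l. l \<in> C' \<Longrightarrow> 0 \<le> a l \<and> 0 < b l \<and> a l + b l \<le> 1"
        using elim unfolding a_def b_def by auto
      define f where "f x = indicator A z * \<psi> (x(j:=z))" for x
      have "(\<lambda>x. x(j:=z)) \<in> measurable (PiM C' (\<lambda>_. borel)) (PiM C (\<lambda>_. borel))"
        unfolding CC(1) by (rule measurable_PiM_single') (auto simp: space_PiM PiE_iff extensional_def)
      then have fm: "f \<in> borel_measurable (PiM C' (\<lambda>_. borel))"
        unfolding f_def by measurable
      have "rank_pattern C j S (x(j:=z)) \<longleftrightarrow> (\<forall>l\<in>C'. x l \<in> {a l<..<a l + b l})" for x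
        unfolding rank_pattern_def a_def b_def C'_def using S by auto
      then have "indicator {u. rank_pattern C j S u} (x(j:=z))
          = (\<Prod>l\<in>C'. indicator {a l<..<a l + b l} (x l) :: ennreal)" for x
        unfolding prod_indicator_eq_indicator_Ball[OF CC(3)] by (simp add: indicator_def)
      then have "(\<integral>\<^sup>+x. indicator {u. rank_pattern C j S u} (x(j:=z)) * indicator A z * \<psi> (x(j:=z)) \<partial>U01_cube C')
          = (\<integral>\<^sup>+x. (\<Prod>l\<in>C'. indicator {a l<..<a l + b l} (x l)) * f x \<partial>U01_cube C')"
        by (simp add: f_def mult.assoc)
      also have "\<dots> = ennreal (\<Prod>l\<in>C'. b l) * (\<integral>\<^sup>+x. f (\<lambda>l\<in>C'. a l + b l * x l) \<partial>U01_cube C')"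
        by (rule nn_integral_U01_cube_box[OF CC(3) ab fm])
      also have "(\<Prod>l\<in>C'. b l) = z ^ card S * (1 - z) ^ card (C' - S)"
      proof -
        have "(\<Prod>l\<in>C'. b l) = (\<Prod>l\<in>C' \<inter> S. z) * (\<Prod>l\<in>C' - S. 1 - z)"
          unfolding b_def using CC(3) by (simp add: prod.If_cases Diff_eq)
        also have "C' \<inter> S = S" using S C'_def by auto
        finally show ?thesis by simp
      qed
      also have "(\<lambda>l\<in>C'. a l + b l * x l)(j := z) = stretch C j S z x" for x
        unfolding stretch_def a_def b_def using CC by (auto simp: fun_eq_iff)
      then have "(\<integral>\<^sup>+x. f (\<lambda>l\<in>C'. a l + b l * x l) \<partial>U01_cube C')
          = indicator A z * (\<integral>\<^sup>+s. \<psi> (stretch C j S z s) \<partial>U01_cube C')"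
        unfolding f_def by (cases "z \<in> A") simp_all
      finally show ?case by (simp only: mult.assoc mult.commute mult.left_commute)
    qed
  qed
  finally show ?thesis unfolding C'_def .
qed

lemma sum_rank_patterns_indicator:
  assumes C: "finite C" and k: "1 \<le> k" "k \<le> card C"
    and pos: "\<forall>l\<in>C. 0 < u l \<and> u l < 1" and dist: "\<forall>l\<in>C. \<forall>l'\<in>C. l \<noteq> l' \<longrightarrow> u l \<noteq> u l'"
  shows "(\<Sum>(j, S)\<in>rank_patterns C k. indicator {u. rank_pattern C j S u} u * indicator A (u j) :: ennreal)
       = indicator A (kth_smallest k C u)"
proof -
  obtain j0 where j0: "j0 \<in> C" "kth_smallest k C u = u j0" "card {l\<in>C. u l < u j0} \<le> k - 1"
    using kth_smallest_attained[OF C k] by blast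
  define S0 where "S0 = {l\<in>C. u l < u j0}"
  have le_eq: "{l\<in>C. u l \<le> u j0} = insert j0 S0"
    using j0 dist unfolding S0_def by (auto simp: less_le)
  have "k \<le> card {l\<in>C. u l \<le> u j0}"
    using kth_smallest_le_iff[OF C k, of u "u j0"] j0 by simp
  also have "\<dots> = Suc (card S0)"
    unfolding le_eq using C S0_def by (subst card_insert_disjoint) auto
  finally have cS0: "card S0 = k - 1" using j0(3) S0_def by simp
  have in_patterns: "(j0, S0) \<in> rank_patterns C k" using j0 cS0 unfolding rank_patterns_def S0_def by auto
  have pattern0: "rank_pattern C j0 S0 u"
    unfolding rank_pattern_def S0_def using pos dist j0(1) by (auto simp: not_less less_le)
  have unique: "(j, S) = (j0, S0)" if js: "(j, S) \<in> rank_patterns C k" and ev: "rank_pattern C j S u" for j S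
  proof -
    from js have j: "j \<in> C" "S \<subseteq> C - {j}" "card S = k - 1" unfolding rank_patterns_def by auto
    have lt: "{l\<in>C. u l < u j} = S"
      using ev j unfolding rank_pattern_def by (auto dest: less_asym)
    have "{l\<in>C. u l \<le> u j} = insert j S"
      using lt j dist by (auto simp: less_le)
    moreover have "finite S" "j \<notin> S" using C j(2) by (auto intro: finite_subset)
    ultimately have "card {l\<in>C. u l \<le> u j} = Suc (card S)"
      by simp
    then have "kth_smallest k C u = u j"
      using kth_smallest_eqI[OF C k j(1)] lt j(3) k by simp
    then have "j = j0" using dist j(1) j0(1,2) by metis
    then show ?thesis using lt S0_def by simp
  qed
  have "(\<Sum>(j, S)\<in>rank_patterns C k. indicator {u. rank_pattern C j S u} u * indicator A (u j) :: ennreal)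
      = indicator {u. rank_pattern C j0 S0 u} u * indicator A (u j0)"
  proof (rule trans[OF sum.mono_neutral_right[of _ "{(j0, S0)}"]])
    show "\<forall>x\<in>rank_patterns C k - {(j0, S0)}.
        (case x of (j, S) \<Rightarrow> indicator {u. rank_pattern C j S u} u * indicator A (u j)) = (0 :: ennreal)"
      using unique by (auto simp: indicator_def)
  qed (use finite_rank_patterns[OF C] in_patterns in auto)
  also have "\<dots> = indicator A (kth_smallest k C u)"
    using pattern0 j0 by simp
  finally show ?thesis .
qed

lemma nn_integral_kth_smallest:
  fixes \<psi> :: "(nat \<Rightarrow> real) \<Rightarrow> ennreal"
  assumes C: "finite C" and k: "1 \<le> k" "k \<le> card C"
    and \<psi>[measurable]: "\<psi> \<in> borel_measurable (PiM C (\<lambda>_. borel))" and A[measurable]: "A \<in> sets borel"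
  shows "(\<integral>\<^sup>+u. indicator A (kth_smallest k C u) * \<psi> u \<partial>U01_cube C)
    = (\<integral>\<^sup>+z. indicator A z * ennreal (order_stat_weight C k z) * cond_kth C k \<psi> z \<partial>U01)"
proof -
  let ?term = "\<lambda>(j, S) u. indicator {u. rank_pattern C j S u} u * indicator A (u j) * \<psi> u :: ennreal"
  let ?cond = "\<lambda>(j, S) z. indicator A z * ennreal (order_stat_weight C k z)
          * (\<integral>\<^sup>+s. \<psi> (stretch C j S z s) \<partial>U01_cube (C - {j}))"
  have term_measurable: "?term x \<in> borel_measurable (U01_cube C)" if hx: "x \<in> rank_patterns C k" for x
  proof -
    obtain j S where x: "x = (j, S)" "j \<in> C" "S \<subseteq> C - {j}"
      using hx unfolding rank_patterns_def by auto
    note [measurable] = measurable_rank_pattern[OF C x(2,3)]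
    have [measurable]: "(\<lambda>u. u j) \<in> borel_measurable (PiM C (\<lambda>_. borel))" using x by simp
    show ?thesis unfolding x(1) by (simp cong: measurable_cong_sets) measurable
  qed
  have cond_measurable: "?cond x \<in> borel_measurable U01" for x
  proof -
    obtain j S where x: "x = (j, S)" by (cases x)
    have [measurable]: "(\<lambda>z. \<integral>\<^sup>+s. \<psi> (stretch C j S z s) \<partial>U01_cube (C - {j})) \<in> borel_measurable borel"
      by (rule borel_measurable_nn_integral_stretch[OF \<psi>])
    show ?thesis unfolding x order_stat_weight_def by (simp cong: measurable_cong_sets) measurable
  qed
  have "(\<integral>\<^sup>+u. indicator A (kth_smallest k C u) * \<psi> u \<partial>U01_cube C)
      = (\<integral>\<^sup>+u. (\<Sum>x\<in>rank_patterns C k. ?term x u) \<partial>U01_cube C)"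
  proof (rule nn_integral_cong_AE)
    show "AE u in U01_cube C. indicator A (kth_smallest k C u) * \<psi> u = (\<Sum>x\<in>rank_patterns C k. ?term x u)"
      using AE_U01_cube_generic[OF C]
    proof eventually_elim
      case (elim u)
      then have "indicator A (kth_smallest k C u) = (\<Sum>(j, S)\<in>rank_patterns C k.
          indicator {u. rank_pattern C j S u} u * indicator A (u j) :: ennreal)"
        using sum_rank_patterns_indicator[OF C k] by auto
      then show ?case by (simp add: sum_distrib_right case_prod_beta)
    qed
  qed
  also have "\<dots> = (\<Sum>x\<in>rank_patterns C k. \<integral>\<^sup>+u. ?term x u \<partial>U01_cube C)"
    by (rule nn_integral_sum) (rule term_measurable)
  also have "\<dots> = (\<Sum>x\<in>rank_patterns C k. \<integral>\<^sup>+z. ?cond x z \<partial>U01)"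
  proof (rule sum.cong[OF refl])
    fix x assume "x \<in> rank_patterns C k"
    then obtain j S where x: "x = (j, S)" "j \<in> C" "S \<subseteq> C - {j}" "card S = k - 1"
      unfolding rank_patterns_def by auto
    have "card (C - {j} - S) = card C - k"
      using x C k by (simp add: card_Diff_subset finite_subset)
    then show "(\<integral>\<^sup>+u. ?term x u \<partial>U01_cube C) = (\<integral>\<^sup>+z. ?cond x z \<partial>U01)"
      using nn_integral_rank_pattern[OF C x(2,3) \<psi> A] x(1,4) by (simp add: order_stat_weight_def)
  qed
  also have "\<dots> = (\<integral>\<^sup>+z. (\<Sum>x\<in>rank_patterns C k. ?cond x z) \<partial>U01)"
    by (rule nn_integral_sum[symmetric]) (rule cond_measurable)
  also have "\<dots> = (\<integral>\<^sup>+z. indicator A z * ennreal (order_stat_weight C k z) * cond_kth C k \<psi> z \<partial>U01)"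
    unfolding cond_kth_def by (simp add: sum_distrib_left case_prod_beta)
  finally show ?thesis .
qed

lemma cond_kth_const_one: "cond_kth C k (\<lambda>_. 1) z = of_nat (card (rank_patterns C k))"
  using prob_space.emeasure_space_1[OF prob_space_U01_cube]
  by (simp add: cond_kth_def case_prod_beta)

lemma cond_kth_le:
  assumes "\<And>x. \<psi> x \<le> 1"
  shows "cond_kth C k \<psi> z \<le> of_nat (card (rank_patterns C k))"
proof -
  have "(\<integral>\<^sup>+s. \<psi> (f s) \<partial>U01_cube (C - {j})) \<le> 1" for j f
  proof -
    have "(\<integral>\<^sup>+s. \<psi> (f s) \<partial>U01_cube (C - {j})) \<le> (\<integral>\<^sup>+s. 1 \<partial>U01_cube (C - {j}))"
      by (intro nn_integral_mono assms)
    also have "\<dots> = 1" using prob_space.emeasure_space_1[OF prob_space_U01_cube] by simp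
    finally show ?thesis .
  qed
  then have "cond_kth C k \<psi> z \<le> (\<Sum>x\<in>rank_patterns C k. 1)"
    unfolding cond_kth_def by (intro sum_mono) (auto simp: case_prod_beta)
  then show ?thesis by simp
qed

text \<open>The conditional law of the cube given the \<open>k\<close>-th order statistic increases stochastically:
  every coordinate of \<open>stretch C j S z s\<close> is nondecreasing in \<open>z\<close> when \<open>s\<close> lies in the cube.\<close>

lemma cond_kth_mono:
  assumes C: "finite C"
    and \<psi>_mono: "\<And>x y. x \<in> PiE C (\<lambda>_. UNIV) \<Longrightarrow> y \<in> PiE C (\<lambda>_. UNIV) \<Longrightarrow>
                   (\<forall>l\<in>C. x l \<le> y l) \<Longrightarrow> \<psi> x \<le> \<psi> y"
    and zz: "z \<le> z'"
  shows "cond_kth C k \<psi> z \<le> cond_kth C k \<psi> z'"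
  unfolding cond_kth_def
proof (intro sum_mono, clarsimp)
  fix j S
  have "\<psi> (stretch C j S z s) \<le> \<psi> (stretch C j S z' s)" if s: "\<forall>l\<in>C - {j}. 0 < s l \<and> s l < 1" for s
  proof (intro \<psi>_mono ballI)
    fix l assume l: "l \<in> C"
    show "stretch C j S z s l \<le> stretch C j S z' s l"
    proof (cases "l = j")
      case False
      then have sl: "0 < s l" "s l < 1" using s l by auto
      have "z * (1 - s l) \<le> z' * (1 - s l)" using zz sl by (intro mult_right_mono) auto
      then have "z + (1 - z) * s l \<le> z' + (1 - z') * s l" by (simp add: algebra_simps)
      then show ?thesis using False l zz sl unfolding stretch_def by (auto intro: mult_right_mono)
    qed (use l zz in \<open>simp add: stretch_def\<close>)
  qed (simp_all add: stretch_def)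
  then show "(\<integral>\<^sup>+s. \<psi> (stretch C j S z s) \<partial>U01_cube (C - {j})) \<le> (\<integral>\<^sup>+s. \<psi> (stretch C j S z' s) \<partial>U01_cube (C - {j}))"
    using AE_U01_cube_generic[of "C - {j}"] C
    by (intro nn_integral_mono_AE) (auto elim!: eventually_mono)
qed

lemma borel_measurable_kth_smallest_U01_cube:
  assumes C: "finite C" and k: "1 \<le> k" "k \<le> card C"
  shows "kth_smallest k C \<in> borel_measurable (U01_cube C)"
  using borel_measurable_kth_smallest[OF C k, of "\<lambda>l w. w l" "U01_cube C"] by (simp cong: measurable_cong_sets)

lemma distr_kth_smallest_U01_cube:
  assumes C: "finite C" and k: "1 \<le> k" "k \<le> card C"
  shows "distr (U01_cube C) borel (kth_smallest k C)
       = density U01 (\<lambda>z. ennreal (order_stat_weight C k z) * of_nat (card (rank_patterns C k)))"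
proof (rule measure_eqI)
  note [measurable] = borel_measurable_kth_smallest_U01_cube[OF C k]
  fix A assume "A \<in> sets (distr (U01_cube C) borel (kth_smallest k C))"
  then have A[measurable]: "A \<in> sets borel" by simp
  have "emeasure (distr (U01_cube C) borel (kth_smallest k C)) A
      = (\<integral>\<^sup>+u. indicator A (kth_smallest k C u) * 1 \<partial>U01_cube C)"
    by (subst emeasure_distr) (auto simp: nn_integral_indicator[symmetric] intro!: nn_integral_cong
        simp del: nn_integral_indicator split: split_indicator)
  also have "\<dots> = (\<integral>\<^sup>+z. indicator A z * ennreal (order_stat_weight C k z) * cond_kth C k (\<lambda>_. 1) z \<partial>U01)"
    by (rule nn_integral_kth_smallest[OF C k _ A]) simp
  also have "\<dots> = emeasure (density U01 (\<lambda>z. ennreal (order_stat_weight C k z) * of_nat (card (rank_patterns C k)))) A"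
    by (subst emeasure_density) (auto simp: cond_kth_const_one mult_ac order_stat_weight_def)
  finally show "emeasure (distr (U01_cube C) borel (kth_smallest k C)) A
      = emeasure (density U01 (\<lambda>z. ennreal (order_stat_weight C k z) * of_nat (card (rank_patterns C k)))) A" .
qed simp

lemma emeasure_distr_kth_smallest_U01_cube_pos:
  assumes C: "finite C" and k: "1 \<le> k" "k \<le> card C" and ab: "0 < a" "a < b" "b \<le> 1"
  shows "emeasure (distr (U01_cube C) borel (kth_smallest k C)) {a..b} \<noteq> 0"
proof
  define N where "N = card (rank_patterns C k)"
  have N: "0 < N" unfolding N_def by (rule card_rank_patterns_pos[OF C k])
  assume "emeasure (distr (U01_cube C) borel (kth_smallest k C)) {a..b} = 0"
  then have "(\<integral>\<^sup>+z. ennreal (order_stat_weight C k z) * of_nat N * indicator {a..b} z \<partial>U01) = 0"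
    unfolding distr_kth_smallest_U01_cube[OF C k] N_def
    by (subst (asm) emeasure_density) (auto simp: order_stat_weight_def)
  then have "AE z in U01. ennreal (order_stat_weight C k z) * of_nat N * indicator {a..b} z = 0"
    by (subst (asm) nn_integral_0_iff_AE) (auto simp: order_stat_weight_def)
  then have "AE z in lborel. z \<in> {0..1} \<longrightarrow> ennreal (order_stat_weight C k z) * of_nat N * indicator {a..b} z = 0"
    by (subst (asm) AE_uniform_measure) auto
  then have "AE z in lborel. z \<notin> {a<..<b}"
  proof (rule eventually_mono)
    fix z :: real assume h: "z \<in> {0..1} \<longrightarrow> ennreal (order_stat_weight C k z) * of_nat N * indicator {a..b} z = 0"
    show "z \<notin> {a<..<b}"
    proof
      assume z: "z \<in> {a<..<b}"
      then have "0 < order_stat_weight C k z" using ab unfolding order_stat_weight_def by auto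
      then show False using h z ab N by (auto simp: indicator_def)
    qed
  qed
  then have "emeasure lborel {a<..<b} = 0"
    by (subst (asm) AE_iff_measurable[OF _ refl])
       (auto simp: greaterThanLessThan_def greaterThan_def lessThan_def Int_def)
  then show False using ab by simp
qed

section \<open>Conditioning a monotone function on a monotone statistic\<close>

text \<open>A generalised inverse of \<open>H\<close> on \<open>[0,1]\<close>; the point \<open>0\<close> is added so that the supremum
  is never taken over the empty set.\<close>

definition upper_inverse :: "(real \<Rightarrow> real) \<Rightarrow> real \<Rightarrow> real" where
  "upper_inverse H t = Sup ({z\<in>{0..1}. H z \<le> t} \<union> {0})"

lemma bdd_above_upper_inverse_set: "bdd_above ({z\<in>{0..1}. H z \<le> t} \<union> {0::real})"
  by (rule bdd_aboveI[of _ 1]) auto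

lemma le_upper_inverse: "y \<in> {0..1} \<Longrightarrow> H y \<le> t \<Longrightarrow> y \<le> upper_inverse H t"
  unfolding upper_inverse_def by (rule cSup_upper) (use bdd_above_upper_inverse_set in auto)

lemma upper_inverse_le:
  assumes H: "mono H" and y: "y \<in> {0..1}" "t < H y"
  shows "upper_inverse H t \<le> y"
  unfolding upper_inverse_def
proof (rule cSup_least)
  fix x assume "x \<in> {z\<in>{0..1}. H z \<le> t} \<union> {0}"
  then show "x \<le> y"
    using y monoD[OF H, of y x] by (cases "x \<le> y") auto
qed simp

lemma mono_upper_inverse: "mono (upper_inverse H)"
  unfolding upper_inverse_def mono_def
  by (intro allI impI cSup_subset_mono) (use bdd_above_upper_inverse_set in auto)

lemma upper_inverse_apply:
  assumes z: "z \<in> {0..1}" and strict: "\<And>x. z < x \<Longrightarrow> x \<le> 1 \<Longrightarrow> H z < H x"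
  shows "upper_inverse H (H z) = z"
proof (rule antisym)
  show "upper_inverse H (H z) \<le> z"
    unfolding upper_inverse_def
  proof (rule cSup_least)
    fix x assume "x \<in> {z'\<in>{0..1}. H z' \<le> H z} \<union> {0}"
    then show "x \<le> z" using z strict[of x] by (cases "x \<le> z") auto
  qed simp
qed (rule le_upper_inverse[OF z order_refl])

text \<open>On a level set of \<open>H\<close> of positive mass the regression of \<open>\<psi>\<close> on \<open>H\<close> is an average of
  \<open>\<psi>\<close>; off these countably many atoms \<open>H\<close> is strictly increasing to the right of the point
  (the law charges every interval), so the regression must be \<open>\<psi>\<close> itself, and
  \<open>\<psi> \<circ> upper_inverse H\<close> extends it monotonically.\<close>

locale monotone_conditioning = prob_space \<nu> for \<nu> :: "real measure" +
  fixes \<psi> H :: "real \<Rightarrow> real"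
  assumes sets_eq: "sets \<nu> = sets borel"
    and AE_interior: "AE z in \<nu>. 0 < z \<and> z < 1"
    and interval_pos: "\<And>a b. 0 < a \<Longrightarrow> a < b \<Longrightarrow> b \<le> 1 \<Longrightarrow> emeasure \<nu> {a..b} \<noteq> 0"
    and mono_\<psi>: "mono \<psi>" and \<psi>_range: "\<And>z. 0 \<le> \<psi> z \<and> \<psi> z \<le> 1"
    and mono_H: "mono H"
begin

definition level_mass :: "real \<Rightarrow> real" where
  "level_mass t = measure \<nu> (H -` {t})"

definition level_integral :: "real \<Rightarrow> ennreal" where
  "level_integral t = (\<integral>\<^sup>+z. indicator (H -` {t}) z * ennreal (\<psi> z) \<partial>\<nu>)"

definition regression :: "real \<Rightarrow> real" where
  "regression t = (if level_mass t \<noteq> 0 then enn2real (level_integral t) / level_mass t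
                   else \<psi> (upper_inverse H t))"

definition atoms :: "real set" where
  "atoms = {t. level_mass t \<noteq> 0}"

lemma space_eq[simp]: "space \<nu> = UNIV"
  using sets_eq_imp_space_eq[OF sets_eq] by simp

lemma borel_measurable_H[measurable]: "H \<in> borel_measurable \<nu>"
  using borel_measurable_mono[OF mono_H] by (simp cong: measurable_cong_sets add: sets_eq)

lemma borel_measurable_\<psi>[measurable]: "\<psi> \<in> borel_measurable \<nu>"
  using borel_measurable_mono[OF mono_\<psi>] by (simp cong: measurable_cong_sets add: sets_eq)

lemma level_sets[measurable]: "H -` {t} \<in> sets \<nu>"
  using measurable_sets[OF borel_measurable_H, of "{t}"] by simp

lemma emeasure_level: "emeasure \<nu> (H -` {t}) = ennreal (level_mass t)"
  unfolding level_mass_def by (rule emeasure_eq_measure)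

lemma level_mass_nonneg: "0 \<le> level_mass t"
  unfolding level_mass_def by simp

lemma countable_atoms: "countable atoms"
proof -
  interpret D: finite_measure "distr \<nu> borel H"
    by (rule finite_measure_distr) (simp_all add: finite_measure_axioms)
  have "measure (distr \<nu> borel H) {t} = level_mass t" for t
    unfolding level_mass_def by (subst measure_distr) (auto simp: vimage_def)
  then show ?thesis using D.countable_support unfolding atoms_def by simp
qed

lemma level_integral_le:
  assumes "AE z in \<nu>. H z = t \<longrightarrow> \<psi> z \<le> c" "0 \<le> c"
  shows "level_integral t \<le> ennreal (c * level_mass t)"
proof -
  have "level_integral t \<le> (\<integral>\<^sup>+z. indicator (H -` {t}) z * ennreal c \<partial>\<nu>)"
    unfolding level_integral_def using assms(1)
    by (intro nn_integral_mono_AE) (auto elim!: eventually_mono simp: indicator_def ennreal_leI)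
  also have "\<dots> = ennreal c * emeasure \<nu> (H -` {t})"
    by (simp add: nn_integral_cmult_indicator mult.commute)
  finally show ?thesis using emeasure_level assms(2) level_mass_nonneg by (simp add: ennreal_mult)
qed

lemma level_integral_ge:
  assumes "AE z in \<nu>. H z = t \<longrightarrow> c \<le> \<psi> z" "0 \<le> c"
  shows "ennreal (c * level_mass t) \<le> level_integral t"
proof -
  have "ennreal (c * level_mass t) = ennreal c * emeasure \<nu> (H -` {t})"
    using emeasure_level assms(2) level_mass_nonneg by (simp add: ennreal_mult)
  also have "\<dots> = (\<integral>\<^sup>+z. indicator (H -` {t}) z * ennreal c \<partial>\<nu>)"
    by (simp add: nn_integral_cmult_indicator mult.commute)
  also have "\<dots> \<le> level_integral t"
    unfolding level_integral_def using assms(1)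
    by (intro nn_integral_mono_AE) (auto elim!: eventually_mono simp: indicator_def ennreal_leI)
  finally show ?thesis .
qed

lemma level_integral_less_top: "level_integral t < top"
  using level_integral_le[of t 1] \<psi>_range by (simp add: le_less_trans)

lemma enn2real_level_integral_le:
  assumes "AE z in \<nu>. H z = t \<longrightarrow> \<psi> z \<le> c" "0 \<le> c"
  shows "enn2real (level_integral t) \<le> c * level_mass t"
  using enn2real_mono[OF level_integral_le[OF assms]] assms(2) level_mass_nonneg by simp

lemma le_enn2real_level_integral:
  assumes "AE z in \<nu>. H z = t \<longrightarrow> c \<le> \<psi> z" "0 \<le> c"
  shows "c * level_mass t \<le> enn2real (level_integral t)"
  using enn2real_mono[OF level_integral_ge[OF assms] level_integral_less_top] assms(2) level_mass_nonneg
  by simp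

lemma regression_le_upper_inverse: "regression t \<le> \<psi> (upper_inverse H t)"
proof (cases "level_mass t = 0")
  case False
  have "AE z in \<nu>. H z = t \<longrightarrow> \<psi> z \<le> \<psi> (upper_inverse H t)"
    using AE_interior by (rule eventually_mono) (auto intro!: monoD[OF mono_\<psi>] le_upper_inverse)
  from enn2real_level_integral_le[OF this] \<psi>_range
  have "enn2real (level_integral t) \<le> \<psi> (upper_inverse H t) * level_mass t" by simp
  then show ?thesis
    using False level_mass_nonneg unfolding regression_def by (simp add: divide_le_eq less_le)
qed (simp add: regression_def)

lemma upper_inverse_le_regression:
  assumes "t < t'"
  shows "\<psi> (upper_inverse H t) \<le> regression t'"
proof (cases "level_mass t' = 0")
  case False
  have "AE z in \<nu>. H z = t' \<longrightarrow> \<psi> (upper_inverse H t) \<le> \<psi> z"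
    using AE_interior
    by (rule eventually_mono) (use assms in \<open>auto intro!: monoD[OF mono_\<psi>] upper_inverse_le[OF mono_H]\<close>)
  from le_enn2real_level_integral[OF this] \<psi>_range
  have "\<psi> (upper_inverse H t) * level_mass t' \<le> enn2real (level_integral t')" by simp
  then show ?thesis
    using False level_mass_nonneg unfolding regression_def by (simp add: le_divide_eq less_le)
next
  case True
  then show ?thesis
    unfolding regression_def
    using monoD[OF mono_\<psi> monoD[OF mono_upper_inverse]] assms by simp
qed

lemma mono_regression: "mono regression"
proof (rule monoI)
  fix t t' :: real assume "t \<le> t'"
  then show "regression t \<le> regression t'"
    using regression_le_upper_inverse[of t] upper_inverse_le_regression[of t t']
    by (cases "t = t'") auto
qed

lemma regression_range: "0 \<le> regression t \<and> regression t \<le> 1"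
proof (cases "level_mass t = 0")
  case False
  have "enn2real (level_integral t) \<le> 1 * level_mass t"
    by (rule enn2real_level_integral_le) (use \<psi>_range in auto)
  then show ?thesis
    using False level_mass_nonneg unfolding regression_def by (simp add: divide_le_eq less_le)
qed (simp add: regression_def \<psi>_range)

lemma regression_off_atoms:
  assumes z: "0 < z" "z < 1" and null: "level_mass (H z) = 0"
  shows "regression (H z) = \<psi> z"
proof -
  have "H z < H x" if x: "z < x" "x \<le> 1" for x
  proof (rule ccontr)
    assume "\<not> H z < H x"
    have "{z..x} \<subseteq> H -` {H z}"
    proof
      fix y assume "y \<in> {z..x}"
      then have "H z \<le> H y" "H y \<le> H x" using monoD[OF mono_H] by auto
      then show "y \<in> H -` {H z}" using \<open>\<not> H z < H x\<close> by simp
    qed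
    then have "emeasure \<nu> {z..x} \<le> emeasure \<nu> (H -` {H z})"
      by (intro emeasure_mono) simp_all
    also have "\<dots> = 0" using emeasure_level null by simp
    finally show False using interval_pos[of z x] z x by auto
  qed
  then have "upper_inverse H (H z) = z"
    using z by (intro upper_inverse_apply) auto
  then show ?thesis using null unfolding regression_def by simp
qed

lemma nn_integral_level_regression:
  assumes t: "t \<in> atoms"
  shows "(\<integral>\<^sup>+z. ennreal (\<psi> z) * indicator (H -` {t}) z \<partial>\<nu>)
       = (\<integral>\<^sup>+z. ennreal (regression (H z)) * indicator (H -` {t}) z \<partial>\<nu>)"
proof -
  have pos: "level_mass t \<noteq> 0" using t unfolding atoms_def by simp
  have "(\<integral>\<^sup>+z. ennreal (\<psi> z) * indicator (H -` {t}) z \<partial>\<nu>) = level_integral t"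
    unfolding level_integral_def by (simp add: mult.commute)
  also have "\<dots> = ennreal (regression t * level_mass t)"
    using pos level_integral_less_top[of t] by (simp add: regression_def)
  also have "\<dots> = ennreal (regression t) * emeasure \<nu> (H -` {t})"
    using emeasure_level regression_range level_mass_nonneg by (simp add: ennreal_mult)
  also have "\<dots> = (\<integral>\<^sup>+z. ennreal (regression t) * indicator (H -` {t}) z \<partial>\<nu>)"
    by (simp add: nn_integral_cmult_indicator)
  also have "\<dots> = (\<integral>\<^sup>+z. ennreal (regression (H z)) * indicator (H -` {t}) z \<partial>\<nu>)"
    by (intro nn_integral_cong) (auto simp: indicator_def)
  finally show ?thesis .
qed

lemma nn_integral_split_atoms:
  assumes B[measurable]: "B \<in> sets borel" and f[measurable]: "f \<in> borel_measurable \<nu>"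
    and f_vanish: "\<And>z. H z \<notin> B \<Longrightarrow> f z = 0"
  shows "(\<integral>\<^sup>+z. f z \<partial>\<nu>) = (\<integral>\<^sup>+t. (\<integral>\<^sup>+z. f z * indicator (H -` {t}) z \<partial>\<nu>) \<partial>count_space (B \<inter> atoms))
      + (\<integral>\<^sup>+z. f z * indicator (- (H -` atoms)) z \<partial>\<nu>)"
proof -
  have atoms[measurable]: "atoms \<in> sets borel"
    by (rule sets.countable[OF _ countable_atoms]) simp
  have [measurable]: "H -` atoms \<in> sets \<nu>"
    using measurable_sets[OF borel_measurable_H atoms] by simp
  define D where "D = distr (density \<nu> f) borel H"
  have emeasure_D: "emeasure D X = (\<integral>\<^sup>+z. f z * indicator (H -` X) z \<partial>\<nu>)"
    if [measurable]: "X \<in> sets borel" for X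
  proof -
    have "H -` X \<in> sets \<nu>" using measurable_sets[OF borel_measurable_H that] by simp
    then show ?thesis unfolding D_def
      by (subst emeasure_distr) (simp_all add: emeasure_density cong: measurable_cong_sets)
  qed
  have "(\<integral>\<^sup>+z. f z \<partial>\<nu>) = (\<integral>\<^sup>+z. indicator (B \<inter> atoms) (H z) * f z + f z * indicator (- (H -` atoms)) z \<partial>\<nu>)"
    by (intro nn_integral_cong) (auto simp: indicator_def f_vanish)
  also have "\<dots> = (\<integral>\<^sup>+z. f z * indicator (H -` (B \<inter> atoms)) z \<partial>\<nu>) + (\<integral>\<^sup>+z. f z * indicator (- (H -` atoms)) z \<partial>\<nu>)"
    by (subst nn_integral_add) (auto intro!: arg_cong2[where f="(+)"] nn_integral_cong simp: indicator_def)
  also have "(\<integral>\<^sup>+z. f z * indicator (H -` (B \<inter> atoms)) z \<partial>\<nu>) = emeasure D (B \<inter> atoms)"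
    by (simp add: emeasure_D)
  also have "\<dots> = (\<integral>\<^sup>+t. emeasure D {t} \<partial>count_space (B \<inter> atoms))"
    by (rule emeasure_countable_singleton) (auto simp: D_def intro: countable_subset[OF _ countable_atoms])
  also have "\<dots> = (\<integral>\<^sup>+t. (\<integral>\<^sup>+z. f z * indicator (H -` {t}) z \<partial>\<nu>) \<partial>count_space (B \<inter> atoms))"
    by (intro nn_integral_cong) (simp add: emeasure_D)
  finally show ?thesis .
qed

lemma nn_integral_regression:
  assumes B[measurable]: "B \<in> sets borel"
  shows "(\<integral>\<^sup>+z. indicator B (H z) * ennreal (\<psi> z) \<partial>\<nu>)
       = (\<integral>\<^sup>+z. indicator B (H z) * ennreal (regression (H z)) \<partial>\<nu>)"
proof -
  have [measurable]: "regression \<in> borel_measurable borel"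
    by (rule borel_measurable_mono[OF mono_regression])
  have [measurable]: "atoms \<in> sets borel"
    by (rule sets.countable[OF _ countable_atoms]) simp
  have atom_parts: "(\<integral>\<^sup>+z. indicator B (H z) * ennreal (\<psi> z) * indicator (H -` {t}) z \<partial>\<nu>)
      = (\<integral>\<^sup>+z. indicator B (H z) * ennreal (regression (H z)) * indicator (H -` {t}) z \<partial>\<nu>)"
    if "t \<in> atoms" for t
  proof -
    have "(\<lambda>z. indicator B (H z) * g z * indicator (H -` {t}) z :: ennreal)
        = (\<lambda>z. indicator B t * (g z * indicator (H -` {t}) z))" for g
      by (auto simp: fun_eq_iff indicator_def)
    then show ?thesis
      using nn_integral_level_regression[OF that] by (cases "t \<in> B") simp_all
  qed
  have rest: "(\<integral>\<^sup>+z. indicator B (H z) * ennreal (\<psi> z) * indicator (- (H -` atoms)) z \<partial>\<nu>)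
      = (\<integral>\<^sup>+z. indicator B (H z) * ennreal (regression (H z)) * indicator (- (H -` atoms)) z \<partial>\<nu>)"
    using AE_interior
  proof (intro nn_integral_cong_AE, elim eventually_mono)
    fix z :: real assume "0 < z \<and> z < 1"
    then show "indicator B (H z) * ennreal (\<psi> z) * indicator (- (H -` atoms)) z
        = indicator B (H z) * ennreal (regression (H z)) * indicator (- (H -` atoms)) z"
      by (cases "H z \<in> atoms") (auto simp: atoms_def regression_off_atoms)
  qed
  have "(\<lambda>z. indicator B (H z) * ennreal (\<psi> z)) \<in> borel_measurable \<nu>"
    "(\<lambda>z. indicator B (H z) * ennreal (regression (H z))) \<in> borel_measurable \<nu>"
    by measurable
  note split = nn_integral_split_atoms[OF B this(1)] nn_integral_split_atoms[OF B this(2)]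
  have "(\<integral>\<^sup>+z. indicator B (H z) * ennreal (\<psi> z) \<partial>\<nu>)
      = (\<integral>\<^sup>+t. (\<integral>\<^sup>+z. indicator B (H z) * ennreal (\<psi> z) * indicator (H -` {t}) z \<partial>\<nu>) \<partial>count_space (B \<inter> atoms))
        + (\<integral>\<^sup>+z. indicator B (H z) * ennreal (\<psi> z) * indicator (- (H -` atoms)) z \<partial>\<nu>)"
    by (rule split(1)) (simp add: indicator_def)
  also have "\<dots> = (\<integral>\<^sup>+t. (\<integral>\<^sup>+z. indicator B (H z) * ennreal (regression (H z)) * indicator (H -` {t}) z \<partial>\<nu>)
          \<partial>count_space (B \<inter> atoms))
        + (\<integral>\<^sup>+z. indicator B (H z) * ennreal (regression (H z)) * indicator (- (H -` atoms)) z \<partial>\<nu>)"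
    unfolding rest by (intro arg_cong2[where f="(+)"] refl, rule nn_integral_cong) (simp add: atom_parts)
  also have "\<dots> = (\<integral>\<^sup>+z. indicator B (H z) * ennreal (regression (H z)) \<partial>\<nu>)"
    by (rule split(2)[symmetric]) (simp add: indicator_def)
  finally show ?thesis .
qed

end

lemma nn_integral_kth_smallest_distr:
  fixes \<psi> :: "(nat \<Rightarrow> real) \<Rightarrow> ennreal"
  assumes C: "finite C" and k: "1 \<le> k" "k \<le> card C"
    and \<psi>[measurable]: "\<psi> \<in> borel_measurable (PiM C (\<lambda>_. borel))" and A[measurable]: "A \<in> sets borel"
  shows "(\<integral>\<^sup>+u. indicator A (kth_smallest k C u) * \<psi> u \<partial>U01_cube C)
    = (\<integral>\<^sup>+z. indicator A z * (cond_kth C k \<psi> z / of_nat (card (rank_patterns C k)))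
         \<partial>distr (U01_cube C) borel (kth_smallest k C))"
proof -
  define N where "N = card (rank_patterns C k)"
  have N: "0 < N" unfolding N_def by (rule card_rank_patterns_pos[OF C k])
  have [measurable]: "cond_kth C k \<psi> \<in> borel_measurable borel"
    by (rule borel_measurable_cond_kth[OF \<psi>])
  have "ennreal w * of_nat N * (indicator A z * (cond_kth C k \<psi> z / of_nat N))
      = indicator A z * ennreal w * cond_kth C k \<psi> z" for w z
  proof -
    have "ennreal w * of_nat N * (indicator A z * (cond_kth C k \<psi> z / of_nat N))
        = indicator A z * ennreal w * (of_nat N * (cond_kth C k \<psi> z / of_nat N))"
      by (simp only: mult_ac)
    also have "of_nat N * (cond_kth C k \<psi> z / of_nat N) = cond_kth C k \<psi> z"
      using N by (simp add: ennreal_times_divide mult.commute[of "of_nat N"] ennreal_mult_divide_eq)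
    finally show ?thesis .
  qed
  then have "(\<integral>\<^sup>+z. indicator A z * (cond_kth C k \<psi> z / of_nat N) \<partial>distr (U01_cube C) borel (kth_smallest k C))
      = (\<integral>\<^sup>+z. indicator A z * ennreal (order_stat_weight C k z) * cond_kth C k \<psi> z \<partial>U01)"
    unfolding distr_kth_smallest_U01_cube[OF C k] N_def[symmetric]
    by (subst nn_integral_density) (auto simp: order_stat_weight_def)
  also have "\<dots> = (\<integral>\<^sup>+u. indicator A (kth_smallest k C u) * \<psi> u \<partial>U01_cube C)"
    by (rule nn_integral_kth_smallest[OF C k \<psi> A, symmetric])
  finally show ?thesis unfolding N_def ..
qed

lemma AE_distr_kth_smallest_interior:
  assumes C: "finite C" and k: "1 \<le> k" "k \<le> card C"
  shows "AE z in distr (U01_cube C) borel (kth_smallest k C). 0 < z \<and> z < 1"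
proof (subst AE_distr_iff)
  show "AE u in U01_cube C. 0 < kth_smallest k C u \<and> kth_smallest k C u < 1"
    using AE_U01_cube_generic[OF C]
  proof (rule eventually_mono)
    fix u :: "nat \<Rightarrow> real" assume "(\<forall>l\<in>C. 0 < u l \<and> u l < 1) \<and> (\<forall>l\<in>C. \<forall>l'\<in>C. l \<noteq> l' \<longrightarrow> u l \<noteq> u l')"
    moreover obtain j where "j \<in> C" "kth_smallest k C u = u j"
      using kth_smallest_attained[OF C k] by metis
    ultimately show "0 < kth_smallest k C u \<and> kth_smallest k C u < 1" by auto
  qed
qed (auto intro: borel_measurable_kth_smallest_U01_cube[OF C k])

lemma monotone_conditioning_kth_smallest:
  assumes C: "finite C" and k: "1 \<le> k" "k \<le> card C"
    and "mono \<psi>" "\<And>z. 0 \<le> \<psi> z \<and> \<psi> z \<le> 1" "mono H"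
  shows "monotone_conditioning (distr (U01_cube C) borel (kth_smallest k C)) \<psi> H"
  unfolding monotone_conditioning_def monotone_conditioning_axioms_def
  using prob_space.prob_space_distr[OF prob_space_U01_cube borel_measurable_kth_smallest_U01_cube[OF C k]]
    AE_distr_kth_smallest_interior[OF C k] emeasure_distr_kth_smallest_U01_cube_pos[OF C k] assms(4-6)
  by simp

lemma kth_smallest_mono_regression:
  fixes \<psi> :: "(nat \<Rightarrow> real) \<Rightarrow> ennreal" and H :: "real \<Rightarrow> real"
  assumes C: "finite C" and k: "1 \<le> k" "k \<le> card C"
    and \<psi>[measurable]: "\<psi> \<in> borel_measurable (PiM C (\<lambda>_. borel))" and \<psi>_le_1: "\<And>x. \<psi> x \<le> 1"
    and \<psi>_mono: "\<And>x y. x \<in> PiE C (\<lambda>_. UNIV) \<Longrightarrow> y \<in> PiE C (\<lambda>_. UNIV) \<Longrightarrow>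
                   (\<forall>l\<in>C. x l \<le> y l) \<Longrightarrow> \<psi> x \<le> \<psi> y"
    and H: "mono H"
  obtains g where "mono g" "\<And>t. 0 \<le> g t \<and> g t \<le> 1"
    "\<And>B. B \<in> sets borel \<Longrightarrow> (\<integral>\<^sup>+u. indicator B (H (kth_smallest k C u)) * \<psi> u \<partial>U01_cube C)
        = (\<integral>\<^sup>+u. indicator B (H (kth_smallest k C u)) * ennreal (g (H (kth_smallest k C u))) \<partial>U01_cube C)"
proof -
  note [measurable] = borel_measurable_kth_smallest_U01_cube[OF C k]
  have [measurable]: "H \<in> borel_measurable borel" by (rule borel_measurable_mono[OF H])
  define N where "N = card (rank_patterns C k)"
  define \<psi>' where "\<psi>' z = enn2real (cond_kth C k \<psi> z / of_nat N)" for z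
  have cond_le_1: "cond_kth C k \<psi> z / of_nat N \<le> 1" for z
  proof -
    have "cond_kth C k \<psi> z / of_nat N \<le> of_nat N / of_nat N"
      unfolding N_def by (intro divide_right_mono_ennreal cond_kth_le \<psi>_le_1)
    also have "\<dots> = 1" using card_rank_patterns_pos[OF C k] by (simp add: N_def divide_eq_1_ennreal)
    finally show ?thesis .
  qed
  then have \<psi>'_eq: "ennreal (\<psi>' z) = cond_kth C k \<psi> z / of_nat N" for z
    unfolding \<psi>'_def using le_less_trans[OF _ ennreal_one_less_top] by simp
  have \<psi>'_range: "0 \<le> \<psi>' z \<and> \<psi>' z \<le> 1" for z
    using cond_le_1[of z] \<psi>'_eq[of z] by (simp add: \<psi>'_def enn2real_leI)
  have "mono \<psi>'"
  proof (rule monoI)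
    fix z z' :: real assume "z \<le> z'"
    then have "cond_kth C k \<psi> z / of_nat N \<le> cond_kth C k \<psi> z' / of_nat N"
      by (intro divide_right_mono_ennreal cond_kth_mono[OF C \<psi>_mono])
    then show "\<psi>' z \<le> \<psi>' z'" using \<psi>'_range by (simp add: \<psi>'_eq[symmetric])
  qed
  interpret monotone_conditioning "distr (U01_cube C) borel (kth_smallest k C)" \<psi>' H
    by (rule monotone_conditioning_kth_smallest[OF C k \<open>mono \<psi>'\<close> \<psi>'_range H])
  have [measurable]: "regression \<in> borel_measurable borel" by (rule borel_measurable_mono[OF mono_regression])
  show ?thesis
  proof (rule that[OF mono_regression regression_range])
    fix B :: "real set" assume B[measurable]: "B \<in> sets borel"
    have "(\<integral>\<^sup>+u. indicator B (H (kth_smallest k C u)) * \<psi> u \<partial>U01_cube C)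
        = (\<integral>\<^sup>+u. indicator (H -` B) (kth_smallest k C u) * \<psi> u \<partial>U01_cube C)"
      by (simp add: indicator_def)
    also have "\<dots> = (\<integral>\<^sup>+z. indicator B (H z) * ennreal (\<psi>' z) \<partial>distr (U01_cube C) borel (kth_smallest k C))"
      using measurable_sets[OF _ B, of H borel]
      by (subst nn_integral_kth_smallest_distr[OF C k \<psi>]) (auto simp: \<psi>'_eq N_def indicator_def)
    also have "\<dots> = (\<integral>\<^sup>+z. indicator B (H z) * ennreal (regression (H z)) \<partial>distr (U01_cube C) borel (kth_smallest k C))"
      by (rule nn_integral_regression[OF B])
    also have "\<dots> = (\<integral>\<^sup>+u. indicator B (H (kth_smallest k C u)) * ennreal (regression (H (kth_smallest k C u))) \<partial>U01_cube C)"
      by (subst nn_integral_distr) auto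
    finally show "(\<integral>\<^sup>+u. indicator B (H (kth_smallest k C u)) * \<psi> u \<partial>U01_cube C)
        = (\<integral>\<^sup>+u. indicator B (H (kth_smallest k C u)) * ennreal (regression (H (kth_smallest k C u))) \<partial>U01_cube C)" .
  qed
qed

section \<open>Integrating out the non-null coordinates\<close>

lemma distr_null_nonnull:
  fixes M :: "'a measure" and p :: "nat \<Rightarrow> 'a \<Rightarrow> real"
  assumes prob: "prob_space M" and S: "S \<subseteq> N" "S \<noteq> {}"
    and rv: "\<And>v. v \<in> N \<Longrightarrow> p v \<in> borel_measurable M"
    and unif: "\<And>v. v \<in> S \<Longrightarrow> distr M borel (p v) = U01"
    and indep_null: "prob_space.indep_vars M (\<lambda>_. borel) p S"
    and indep_nonnull: "prob_space.indep_var M (PiM S (\<lambda>_. borel)) (\<lambda>\<omega>. \<lambda>v\<in>S. p v \<omega>)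
          (PiM (N - S) (\<lambda>_. borel)) (\<lambda>\<omega>. \<lambda>v\<in>N - S. p v \<omega>)"
  shows "distr M (PiM S (\<lambda>_. borel) \<Otimes>\<^sub>M PiM (N - S) (\<lambda>_. borel)) (\<lambda>\<omega>. (\<lambda>v\<in>S. p v \<omega>, \<lambda>v\<in>N - S. p v \<omega>))
       = U01_cube S \<Otimes>\<^sub>M distr M (PiM (N - S) (\<lambda>_. borel)) (\<lambda>\<omega>. \<lambda>v\<in>N - S. p v \<omega>)"
proof -
  interpret prob_space M by (rule prob)
  have "distr M (PiM S (\<lambda>_. borel)) (\<lambda>\<omega>. \<lambda>v\<in>S. p v \<omega>) = PiM S (\<lambda>v. distr M borel (p v))"
    using indep_vars_iff_distr_eq_PiM'[where M'="\<lambda>_. borel" and X=p, OF S(2)] indep_null rv S(1)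
    by auto
  also have "\<dots> = U01_cube S" using unif by (intro PiM_cong) auto
  finally show ?thesis
    using indep_var_distribution_eq[THEN iffD1, OF indep_nonnull] by simp
qed

text \<open>\<open>integrate_out M p N S C F u\<close> is the conditional expectation of \<open>F (p\<^sub>N)\<close> given
  \<open>p\<^sub>C = u\<close>, when \<open>p\<^sub>S\<close> is uniform on the cube and independent of \<open>p\<^sub>N\<^sub>-\<^sub>S\<close>.\<close>

definition integrate_out :: "'a measure \<Rightarrow> (nat \<Rightarrow> 'a \<Rightarrow> real) \<Rightarrow> nat set \<Rightarrow> nat set \<Rightarrow> nat set
    \<Rightarrow> ((nat \<Rightarrow> real) \<Rightarrow> ennreal) \<Rightarrow> (nat \<Rightarrow> real) \<Rightarrow> ennreal" where
  "integrate_out M p N S C F u =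
    (\<integral>\<^sup>+s. (\<integral>\<^sup>+b. F (merge S (N - S) (merge C (S - C) (u, s), b))
       \<partial>distr M (PiM (N - S) (\<lambda>_. borel)) (\<lambda>\<omega>. \<lambda>v\<in>N - S. p v \<omega>)) \<partial>U01_cube (S - C))"

lemma nn_integral_integrate_out:
  fixes M :: "'a measure" and p :: "nat \<Rightarrow> 'a \<Rightarrow> real" and F :: "(nat \<Rightarrow> real) \<Rightarrow> ennreal"
  assumes prob: "prob_space M" and N: "finite N" and S: "S \<subseteq> N" and C: "C \<subseteq> S" "C \<noteq> {}"
    and rv: "\<And>v. v \<in> N \<Longrightarrow> p v \<in> borel_measurable M"
    and unif: "\<And>v. v \<in> S \<Longrightarrow> distr M borel (p v) = U01"
    and indep_null: "prob_space.indep_vars M (\<lambda>_. borel) p S"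
    and indep_nonnull: "prob_space.indep_var M (PiM S (\<lambda>_. borel)) (\<lambda>\<omega>. \<lambda>v\<in>S. p v \<omega>)
          (PiM (N - S) (\<lambda>_. borel)) (\<lambda>\<omega>. \<lambda>v\<in>N - S. p v \<omega>)"
    and F[measurable]: "F \<in> borel_measurable (PiM N (\<lambda>_. borel))"
  shows "(\<integral>\<^sup>+\<omega>. F (\<lambda>j\<in>N. p j \<omega>) \<partial>M) = (\<integral>\<^sup>+u. integrate_out M p N S C F u \<partial>U01_cube C)"
    and "integrate_out M p N S C F \<in> borel_measurable (U01_cube C)"
proof -
  interpret prob_space M by (rule prob)
  define L where "L = distr M (PiM (N - S) (\<lambda>_. borel)) (\<lambda>\<omega>. \<lambda>v\<in>N - S. p v \<omega>)"
  define R where "R = N - S"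
  have N_eq: "N = S \<union> R" using S by (auto simp: R_def)
  have [measurable]: "(\<lambda>\<omega>. \<lambda>v\<in>R. p v \<omega>) \<in> measurable M (PiM R (\<lambda>_. borel))"
    using rv by (intro measurable_restrict) (auto simp: R_def)
  interpret L: prob_space L unfolding L_def R_def[symmetric] by (rule prob_space_distr) simp
  interpret U: prob_space "U01_cube (S - C)" by (rule prob_space_U01_cube)
  have [measurable]: "(\<lambda>\<omega>. \<lambda>v\<in>S. p v \<omega>) \<in> measurable M (PiM S (\<lambda>_. borel))"
    using rv S by (intro measurable_restrict) auto
  have joint: "distr M (PiM S (\<lambda>_. borel) \<Otimes>\<^sub>M PiM R (\<lambda>_. borel)) (\<lambda>\<omega>. (\<lambda>v\<in>S. p v \<omega>, \<lambda>v\<in>R. p v \<omega>))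
      = U01_cube S \<Otimes>\<^sub>M L"
    unfolding L_def R_def using C S by (intro distr_null_nonnull[OF prob _ _ rv unif indep_null indep_nonnull]) auto
  have FS[measurable]: "(\<lambda>x. F (merge S R x)) \<in> borel_measurable (U01_cube S \<Otimes>\<^sub>M L)"
    using measurable_comp[OF measurable_merge F[unfolded N_eq]]
    by (simp add: comp_def L_def R_def cong: measurable_cong_sets)
  have "(\<lambda>j\<in>N. p j \<omega>) = merge S R (\<lambda>v\<in>S. p v \<omega>, \<lambda>v\<in>R. p v \<omega>)" for \<omega>
    using N_eq by (auto simp: fun_eq_iff merge_def R_def)
  then have "(\<integral>\<^sup>+\<omega>. F (\<lambda>j\<in>N. p j \<omega>) \<partial>M)
      = (\<integral>\<^sup>+x. F (merge S R x) \<partial>distr M (PiM S (\<lambda>_. borel) \<Otimes>\<^sub>M PiM R (\<lambda>_. borel))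
           (\<lambda>\<omega>. (\<lambda>v\<in>S. p v \<omega>, \<lambda>v\<in>R. p v \<omega>)))"
    using FS by (subst nn_integral_distr) (auto simp: joint)
  also have "\<dots> = (\<integral>\<^sup>+a. (\<integral>\<^sup>+b. F (merge S R (a, b)) \<partial>L) \<partial>U01_cube S)"
    unfolding joint using L.nn_integral_fst[OF FS] by simp
  also have "\<dots> = (\<integral>\<^sup>+u. (\<integral>\<^sup>+s. (\<integral>\<^sup>+b. F (merge S R (merge C (S - C) (u, s), b)) \<partial>L) \<partial>U01_cube (S - C)) \<partial>U01_cube C)"
    using U01_product.product_nn_integral_fold[of C "S - C"] L.borel_measurable_nn_integral_fst[OF FS] C S N
    by (simp add: Un_absorb1 finite_subset)
  finally show "(\<integral>\<^sup>+\<omega>. F (\<lambda>j\<in>N. p j \<omega>) \<partial>M) = (\<integral>\<^sup>+u. integrate_out M p N S C F u \<partial>U01_cube C)"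
    unfolding integrate_out_def L_def R_def .
  have "(\<lambda>x. merge C (S - C) (fst (fst x), snd (fst x)))
      \<in> measurable ((U01_cube C \<Otimes>\<^sub>M U01_cube (S - C)) \<Otimes>\<^sub>M L) (U01_cube (C \<union> (S - C)))"
    by measurable
  then have "(\<lambda>x. merge C (S - C) (fst (fst x), snd (fst x)))
      \<in> measurable ((U01_cube C \<Otimes>\<^sub>M U01_cube (S - C)) \<Otimes>\<^sub>M L) (U01_cube S)"
    using C by (simp add: Un_absorb1)
  then have "(\<lambda>x. F (merge S R (merge C (S - C) (fst (fst x), snd (fst x)), snd x)))
      \<in> borel_measurable ((U01_cube C \<Otimes>\<^sub>M U01_cube (S - C)) \<Otimes>\<^sub>M L)"
    using measurable_comp[OF _ FS, of "\<lambda>x. (merge C (S - C) (fst (fst x), snd (fst x)), snd x)"]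
    by (simp add: comp_def)
  from U.borel_measurable_nn_integral_fst[OF L.borel_measurable_nn_integral_fst[OF this]]
  show "integrate_out M p N S C F \<in> borel_measurable (U01_cube C)"
    unfolding integrate_out_def[abs_def] by (simp add: L_def R_def)
qed

lemma merge_in_PiE: "S \<subseteq> N \<Longrightarrow> merge S (N - S) (x, y) \<in> PiE N (\<lambda>_. UNIV)"
  by (auto simp: merge_def PiE_iff extensional_def)

lemma integrate_out_le_1:
  assumes "prob_space M" "\<And>v. v \<in> N \<Longrightarrow> p v \<in> borel_measurable M" "\<And>x. F x \<le> 1"
  shows "integrate_out M p N S C F u \<le> 1"
proof -
  interpret L: prob_space "distr M (PiM (N - S) (\<lambda>_. borel)) (\<lambda>\<omega>. \<lambda>v\<in>N - S. p v \<omega>)"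
    using assms(2) by (intro prob_space.prob_space_distr[OF assms(1)] measurable_restrict) auto
  interpret U: prob_space "U01_cube (S - C)" by (rule prob_space_U01_cube)
  have "integrate_out M p N S C F u \<le> integrate_out M p N S C (\<lambda>_. 1) u"
    unfolding integrate_out_def by (intro nn_integral_mono assms(3))
  also have "\<dots> = 1"
    unfolding integrate_out_def using L.emeasure_space_1 U.emeasure_space_1 by simp
  finally show ?thesis .
qed

lemma integrate_out_mono:
  assumes S: "S \<subseteq> N"
    and F_mono: "\<And>x y. x \<in> PiE N (\<lambda>_. UNIV) \<Longrightarrow> y \<in> PiE N (\<lambda>_. UNIV) \<Longrightarrow>
                   (\<forall>l\<in>N. x l \<le> y l) \<Longrightarrow> F x \<le> F y"
    and le: "\<forall>l\<in>C. x l \<le> y l"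
  shows "integrate_out M p N S C F x \<le> integrate_out M p N S C F y"
  unfolding integrate_out_def
  by (intro nn_integral_mono F_mono merge_in_PiE S) (use le S in \<open>auto simp: merge_def\<close>)

lemma integrate_out_times_kth_smallest:
  assumes "C \<subseteq> S"
  shows "integrate_out M p N S C (\<lambda>x. F x * indicator B (H (kth_smallest k C x))) u
       = indicator B (H (kth_smallest k C u)) * integrate_out M p N S C F u"
proof -
  have "kth_smallest k C (merge S (N - S) (merge C (S - C) (u, s), b)) = kth_smallest k C u" for s b
    using assms by (intro kth_smallest_cong) (auto simp: merge_def)
  then show ?thesis
    unfolding integrate_out_def by (cases "H (kth_smallest k C u) \<in> B") simp_all
qed

lemma integrate_out_kth_smallest:
  assumes "prob_space M" "\<And>v. v \<in> N \<Longrightarrow> p v \<in> borel_measurable M" "C \<subseteq> S"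
  shows "integrate_out M p N S C (\<lambda>x. ennreal (f (kth_smallest k C x))) u = ennreal (f (kth_smallest k C u))"
proof -
  interpret L: prob_space "distr M (PiM (N - S) (\<lambda>_. borel)) (\<lambda>\<omega>. \<lambda>v\<in>N - S. p v \<omega>)"
    using assms(2) by (intro prob_space.prob_space_distr[OF assms(1)] measurable_restrict) auto
  interpret U: prob_space "U01_cube (S - C)" by (rule prob_space_U01_cube)
  have "kth_smallest k C (merge S (N - S) (merge C (S - C) (u, s), b)) = kth_smallest k C u" for s b
    using assms(3) by (intro kth_smallest_cong) (auto simp: merge_def)
  then show ?thesis
    unfolding integrate_out_def using L.emeasure_space_1 U.emeasure_space_1 by simp
qed

lemma exists_mono_regression_integrate_out:
  fixes M :: "'a measure" and p :: "nat \<Rightarrow> 'a \<Rightarrow> real" and F :: "(nat \<Rightarrow> real) \<Rightarrow> ennreal"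
    and H :: "real \<Rightarrow> real" and N S C :: "nat set"
  assumes prob: "prob_space M" and N: "finite N" and S: "S \<subseteq> N" and C: "C \<subseteq> S"
    and k: "1 \<le> k" "k \<le> card C"
    and rv: "\<And>v. v \<in> N \<Longrightarrow> p v \<in> borel_measurable M"
    and unif: "\<And>v. v \<in> S \<Longrightarrow> distr M borel (p v) = U01"
    and indep_null: "prob_space.indep_vars M (\<lambda>_. borel) p S"
    and indep_nonnull: "prob_space.indep_var M (PiM S (\<lambda>_. borel)) (\<lambda>\<omega>. \<lambda>v\<in>S. p v \<omega>)
          (PiM (N - S) (\<lambda>_. borel)) (\<lambda>\<omega>. \<lambda>v\<in>N - S. p v \<omega>)"
    and F[measurable]: "F \<in> borel_measurable (PiM N (\<lambda>_. borel))" and F_le_1: "\<And>x. F x \<le> 1"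
    and F_mono: "\<And>x y. x \<in> PiE N (\<lambda>_. UNIV) \<Longrightarrow> y \<in> PiE N (\<lambda>_. UNIV) \<Longrightarrow>
                   (\<forall>l\<in>N. x l \<le> y l) \<Longrightarrow> F x \<le> F y"
    and H: "mono H"
  obtains g where "mono g" "\<And>t. 0 \<le> g t \<and> g t \<le> 1"
    "\<And>B. B \<in> sets borel \<Longrightarrow>
      (\<integral>\<^sup>+\<omega>. F (\<lambda>j\<in>N. p j \<omega>) * indicator B (H (kth_smallest k C (\<lambda>j. p j \<omega>))) \<partial>M)
      = (\<integral>\<^sup>+\<omega>. ennreal (indicator B (H (kth_smallest k C (\<lambda>j. p j \<omega>)))
                       * g (H (kth_smallest k C (\<lambda>j. p j \<omega>)))) \<partial>M)"
proof -
  have finC: "finite C" using C S N by (auto intro: finite_subset)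
  have [measurable]: "H \<in> borel_measurable borel" by (rule borel_measurable_mono[OF H])
  have [measurable]: "kth_smallest k C \<in> borel_measurable (PiM N (\<lambda>_. borel))"
    by (rule borel_measurable_kth_smallest[OF finC k, of "\<lambda>l x. x l"])
       (use C S in \<open>auto intro!: measurable_component_singleton\<close>)
  have "C \<noteq> {}" using k by auto
  note integrate_out = nn_integral_integrate_out[OF prob N S C this _ _ indep_null indep_nonnull]
  have kth_restrict: "kth_smallest k C (\<lambda>j\<in>N. p j \<omega>) = kth_smallest k C (\<lambda>j. p j \<omega>)" for \<omega>
    using C S by (intro kth_smallest_cong) auto
  let ?\<psi> = "integrate_out M p N S C F"
  have "?\<psi> \<in> borel_measurable (PiM C (\<lambda>_. borel))"
    using integrate_out(2)[OF _ _ F] rv unif by (simp cong: measurable_cong_sets)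
  moreover have "?\<psi> u \<le> 1" for u
    by (rule integrate_out_le_1) (use prob rv F_le_1 in auto)
  moreover have "?\<psi> x \<le> ?\<psi> y" if "\<forall>l\<in>C. x l \<le> y l" for x y
    by (rule integrate_out_mono) (use S F_mono that in auto)
  ultimately obtain g where g: "mono g" "\<And>t. 0 \<le> g t \<and> g t \<le> 1"
    "\<And>B. B \<in> sets borel \<Longrightarrow> (\<integral>\<^sup>+u. indicator B (H (kth_smallest k C u)) * ?\<psi> u \<partial>U01_cube C)
        = (\<integral>\<^sup>+u. indicator B (H (kth_smallest k C u)) * ennreal (g (H (kth_smallest k C u))) \<partial>U01_cube C)"
    using kth_smallest_mono_regression[where \<psi>="?\<psi>", OF finC k _ _ _ H] by blast
  have [measurable]: "g \<in> borel_measurable borel" by (rule borel_measurable_mono[OF g(1)])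
  show ?thesis
  proof (rule that[OF g(1,2)], unfold kth_restrict[symmetric])
    fix B :: "real set" assume B[measurable]: "B \<in> sets borel"
    have "(\<integral>\<^sup>+\<omega>. (\<lambda>x. F x * indicator B (H (kth_smallest k C x))) (\<lambda>j\<in>N. p j \<omega>) \<partial>M)
        = (\<integral>\<^sup>+u. indicator B (H (kth_smallest k C u)) * ?\<psi> u \<partial>U01_cube C)"
      using integrate_out(1)[of "\<lambda>x. F x * indicator B (H (kth_smallest k C x))"] rv unif
      by (auto simp: integrate_out_times_kth_smallest[OF C])
    also have "\<dots> = (\<integral>\<^sup>+u. indicator B (H (kth_smallest k C u)) * ennreal (g (H (kth_smallest k C u))) \<partial>U01_cube C)"
      by (rule g(3)[OF B])
    also have "\<dots> = (\<integral>\<^sup>+\<omega>. (\<lambda>x. ennreal (indicator B (H (kth_smallest k C x)) * g (H (kth_smallest k C x))))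
        (\<lambda>j\<in>N. p j \<omega>) \<partial>M)"
      using integrate_out(1)[of "\<lambda>x. ennreal (indicator B (H (kth_smallest k C x)) * g (H (kth_smallest k C x)))"]
        rv unif
      by (auto simp: integrate_out_kth_smallest[where f="\<lambda>z. indicator B (H z) * g (H z)", OF prob _ C] intro!: nn_integral_cong split: split_indicator)
    finally show "(\<integral>\<^sup>+\<omega>. F (\<lambda>j\<in>N. p j \<omega>) * indicator B (H (kth_smallest k C (\<lambda>j\<in>N. p j \<omega>))) \<partial>M)
      = (\<integral>\<^sup>+\<omega>. ennreal (indicator B (H (kth_smallest k C (\<lambda>j\<in>N. p j \<omega>)))
                       * g (H (kth_smallest k C (\<lambda>j\<in>N. p j \<omega>)))) \<partial>M)" by simp
  qed
qed

section \<open>The adjusted \<open>p\<close>-values are PRDS\<close>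

lemma desc_closure_subset:
  assumes "E \<subseteq> N \<times> N" "v \<in> N"
  shows "desc_closure E v \<subseteq> N"
  using trancl_subset_Sigma[OF assms(1)] assms(2) by (auto simp: desc_closure_def)

lemma desc_closure_subset_null:
  assumes E: "E \<subseteq> N \<times> N" and hierarchy: "\<forall>v\<in>N - S. \<forall>w. (w, v) \<in> E\<^sup>+ \<longrightarrow> w \<notin> S"
    and i: "i \<in> S"
  shows "desc_closure E i \<subseteq> S"
proof
  fix w assume "w \<in> desc_closure E i"
  then have "w = i \<or> (i, w) \<in> E\<^sup>+" by (auto simp: desc_closure_def)
  then show "w \<in> S"
    using i hierarchy trancl_subset_Sigma[OF E] by blast
qed

lemma tilde_p_cong:
  assumes "\<And>l. l \<in> desc_closure E v \<Longrightarrow> x l = y l"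
  shows "tilde_p E G k v x = tilde_p E G k v y"
  unfolding tilde_p_def f_stat_def using kth_smallest_cong[OF assms] by simp

lemma mono_F_cdf:
  assumes C: "finite (desc_closure E v)" and k: "1 \<le> k v" "k v \<le> card (desc_closure E v)"
    and G: "mono (G v)"
  shows "mono (F_cdf E G k v)"
proof (rule monoI)
  fix t t' :: real assume "t \<le> t'"
  let ?C = "desc_closure E v"
  have [measurable]: "G v \<in> borel_measurable borel" by (rule borel_measurable_mono[OF G])
  have [measurable]: "kth_smallest (k v) ?C \<in> borel_measurable (U01_cube ?C)"
    by (rule borel_measurable_kth_smallest_U01_cube[OF C k])
  have [measurable]: "f_stat E G k v \<in> borel_measurable (U01_cube ?C)"
    unfolding f_stat_def[abs_def] by measurable
  interpret prob_space "U01_cube ?C" by (rule prob_space_U01_cube)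
  show "F_cdf E G k v t \<le> F_cdf E G k v t'"
    unfolding F_cdf_def by (rule finite_measure_mono) (use \<open>t \<le> t'\<close> in auto)
qed

lemma tilde_p_eq_kth_smallest:
  "tilde_p E G k v x = (F_cdf E G k v \<circ> G v) (kth_smallest (k v) (desc_closure E v) x)"
  by (simp add: tilde_p_def f_stat_def)

lemma mono_tilde_p_kth_smallest:
  assumes "finite (desc_closure E v)" "1 \<le> k v" "k v \<le> card (desc_closure E v)" "mono (G v)"
  shows "mono (F_cdf E G k v \<circ> G v)"
  using mono_F_cdf[where E=E and v=v and k=k and G=G, OF assms] assms(4) by (auto simp: mono_def)

lemma tilde_p_mono:
  assumes C: "finite (desc_closure E v)" and k: "1 \<le> k v" "k v \<le> card (desc_closure E v)"
    and G: "mono (G v)" and le: "\<And>l. l \<in> desc_closure E v \<Longrightarrow> x l \<le> y l"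
  shows "tilde_p E G k v x \<le> tilde_p E G k v y"
  unfolding tilde_p_eq_kth_smallest
  by (intro monoD[OF mono_tilde_p_kth_smallest[where E=E and v=v and k=k and G=G, OF C k G]] kth_smallest_mono[OF C k le])

lemma borel_measurable_tilde_p:
  assumes C: "finite (desc_closure E v)" and k: "1 \<le> k v" "k v \<le> card (desc_closure E v)"
    and G: "mono (G v)" and Y: "\<And>l. l \<in> desc_closure E v \<Longrightarrow> (\<lambda>w. Y l w) \<in> borel_measurable M"
  shows "(\<lambda>w. tilde_p E G k v (\<lambda>l. Y l w)) \<in> borel_measurable M"
proof -
  have [measurable]: "F_cdf E G k v \<circ> G v \<in> borel_measurable borel"
    by (rule borel_measurable_mono[OF mono_tilde_p_kth_smallest[where E=E and v=v and k=k and G=G, OF C k G]])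
  have [measurable]: "(\<lambda>w. kth_smallest (k v) (desc_closure E v) (\<lambda>l. Y l w)) \<in> borel_measurable M"
    by (rule borel_measurable_kth_smallest[OF C k Y])
  show ?thesis unfolding tilde_p_eq_kth_smallest by measurable
qed

lemma measurable_tilde_p_vector:
  assumes E: "E \<subseteq> N \<times> N" and N: "finite N" and G: "\<And>v. v \<in> N \<Longrightarrow> mono (G v)"
    and k: "\<And>v. v \<in> N \<Longrightarrow> 1 \<le> k v \<and> k v \<le> card (desc_closure E v)"
  shows "(\<lambda>x. \<lambda>j\<in>N. tilde_p E G k j x) \<in> measurable (PiM N (\<lambda>_. borel)) (PiM N (\<lambda>_. borel))"
proof (rule measurable_restrict)
  fix v assume v: "v \<in> N"
  then have "desc_closure E v \<subseteq> N" by (rule desc_closure_subset[OF E])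
  then show "tilde_p E G k v \<in> borel_measurable (PiM N (\<lambda>_. borel))"
    using k[OF v] G[OF v] N
    by (intro borel_measurable_tilde_p[where Y="\<lambda>l x. x l", simplified])
       (auto intro: finite_subset intro!: measurable_component_singleton)
qed

lemma PRDS_I:
  fixes M :: "'a measure" and X :: "nat \<Rightarrow> 'a \<Rightarrow> real"
  assumes prob: "prob_space M" and X[measurable]: "\<And>i. i \<in> I \<Longrightarrow> X i \<in> borel_measurable M"
    and T: "T \<subseteq> I"
    and regression: "\<And>D i. nondecreasing_set I D \<Longrightarrow> D \<in> sets (PiM I (\<lambda>_. borel)) \<Longrightarrow> i \<in> T \<Longrightarrow>
      \<exists>g. mono g \<and> (\<forall>t. 0 \<le> g t \<and> g t \<le> 1) \<and>
        (\<forall>B\<in>sets borel. (\<integral>\<^sup>+\<omega>. indicator D (\<lambda>j\<in>I. X j \<omega>) * indicator B (X i \<omega>) \<partial>M)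
                       = (\<integral>\<^sup>+\<omega>. ennreal (indicator B (X i \<omega>) * g (X i \<omega>)) \<partial>M))"
  shows "PRDS M I X T"
  unfolding PRDS_def
proof (intro allI impI ballI, elim conjE)
  interpret prob_space M by (rule prob)
  fix D i assume D: "nondecreasing_set I D" "D \<in> sets (PiM I (\<lambda>_. borel))" and i: "i \<in> T"
  obtain g where g: "mono g" "\<And>t. 0 \<le> g t \<and> g t \<le> 1"
    "\<And>B. B \<in> sets borel \<Longrightarrow> (\<integral>\<^sup>+\<omega>. indicator D (\<lambda>j\<in>I. X j \<omega>) * indicator B (X i \<omega>) \<partial>M)
                       = (\<integral>\<^sup>+\<omega>. ennreal (indicator B (X i \<omega>) * g (X i \<omega>)) \<partial>M)"
    using regression[OF D i] by blast
  have [measurable]: "g \<in> borel_measurable borel" by (rule borel_measurable_mono[OF g(1)])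
  have [measurable]: "X i \<in> borel_measurable M" using i T X by auto
  have [measurable]: "(\<lambda>\<omega>. \<lambda>j\<in>I. X j \<omega>) \<in> measurable M (PiM I (\<lambda>_. borel))"
    by (rule measurable_restrict) (rule X)
  show "\<exists>g. mono g \<and> g \<in> borel_measurable borel \<and> (\<forall>B\<in>sets borel.
      measure M {\<omega> \<in> space M. (\<lambda>j\<in>I. X j \<omega>) \<in> D \<and> X i \<omega> \<in> B}
        = (\<integral>\<omega>. indicator B (X i \<omega>) * g (X i \<omega>) \<partial>M))"
  proof (intro exI conjI ballI)
    fix B :: "real set" assume B[measurable]: "B \<in> sets borel"
    have "{\<omega> \<in> space M. (\<lambda>j\<in>I. X j \<omega>) \<in> D \<and> X i \<omega> \<in> B} \<in> sets M"
      using D(2) by measurable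
    then have "measure M {\<omega> \<in> space M. (\<lambda>j\<in>I. X j \<omega>) \<in> D \<and> X i \<omega> \<in> B}
        = enn2real (\<integral>\<^sup>+\<omega>. indicator D (\<lambda>j\<in>I. X j \<omega>) * indicator B (X i \<omega>) \<partial>M)"
      by (simp add: measure_def nn_integral_indicator[symmetric] indicator_def of_bool_conj
          cong: nn_integral_cong)
    also have "\<dots> = (\<integral>\<omega>. indicator B (X i \<omega>) * g (X i \<omega>) \<partial>M)"
      using g(2) by (subst g(3)[OF B], subst integral_eq_nn_integral) auto
    finally show "measure M {\<omega> \<in> space M. (\<lambda>j\<in>I. X j \<omega>) \<in> D \<and> X i \<omega> \<in> B}
        = (\<integral>\<omega>. indicator B (X i \<omega>) * g (X i \<omega>) \<partial>M)" .
  qed (use g in auto)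
qed

lemma exists_mono_regression_tilde_p:
  fixes M :: "'a measure" and p :: "nat \<Rightarrow> 'a \<Rightarrow> real" and N S :: "nat set" and D :: "(nat \<Rightarrow> real) set"
  assumes prob: "prob_space M" and N: "finite N" and S: "S \<subseteq> N"
    and E: "E \<subseteq> N \<times> N" and hierarchy: "\<forall>v\<in>N - S. \<forall>w. (w, v) \<in> E\<^sup>+ \<longrightarrow> w \<notin> S"
    and rv: "\<And>v. v \<in> N \<Longrightarrow> p v \<in> borel_measurable M"
    and unif: "\<And>v. v \<in> S \<Longrightarrow> distr M borel (p v) = U01"
    and indep_null: "prob_space.indep_vars M (\<lambda>_. borel) p S"
    and indep_nonnull: "prob_space.indep_var M (PiM S (\<lambda>_. borel)) (\<lambda>\<omega>. \<lambda>v\<in>S. p v \<omega>)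
          (PiM (N - S) (\<lambda>_. borel)) (\<lambda>\<omega>. \<lambda>v\<in>N - S. p v \<omega>)"
    and G: "\<And>v. v \<in> N \<Longrightarrow> mono (G v)"
    and k: "\<And>v. v \<in> N \<Longrightarrow> 1 \<le> k v \<and> k v \<le> card (desc_closure E v)"
    and D: "nondecreasing_set N D" "D \<in> sets (PiM N (\<lambda>_. borel))" and i: "i \<in> S"
  shows "\<exists>g. mono g \<and> (\<forall>t. 0 \<le> g t \<and> g t \<le> 1) \<and> (\<forall>B\<in>sets borel.
    (\<integral>\<^sup>+\<omega>. indicator D (\<lambda>j\<in>N. tilde_p E G k j (\<lambda>l. p l \<omega>)) * indicator B (tilde_p E G k i (\<lambda>l. p l \<omega>)) \<partial>M)
    = (\<integral>\<^sup>+\<omega>. ennreal (indicator B (tilde_p E G k i (\<lambda>l. p l \<omega>)) * g (tilde_p E G k i (\<lambda>l. p l \<omega>))) \<partial>M))"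
proof -
  have v_facts: "desc_closure E v \<subseteq> N" "finite (desc_closure E v)"
    "1 \<le> k v" "k v \<le> card (desc_closure E v)" "mono (G v)" if "v \<in> N" for v
    using desc_closure_subset[OF E that] k[OF that] G[OF that] N by (auto intro: finite_subset)
  have "i \<in> N" using i S by auto
  let ?C = "desc_closure E i" and ?H = "F_cdf E G k i \<circ> G i"
  define F where "F x = (indicator D (\<lambda>j\<in>N. tilde_p E G k j x) :: ennreal)" for x
  have F_measurable: "F \<in> borel_measurable (PiM N (\<lambda>_. borel))"
    unfolding F_def using measurable_tilde_p_vector[OF E N G k] D(2) by measurable
  have F_le_1: "F x \<le> 1" for x
    unfolding F_def by (simp add: indicator_def)
  have F_mono: "F x \<le> F y" if le: "\<forall>l\<in>N. x l \<le> y l" for x y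
  proof -
    have "tilde_p E G k j x \<le> tilde_p E G k j y" if "j \<in> N" for j
      using v_facts[OF that] le by (intro tilde_p_mono) auto
    then show ?thesis
      using D(1) unfolding F_def nondecreasing_set_def by (auto simp: indicator_def)
  qed
  obtain g where g: "mono g" "\<And>t. 0 \<le> g t \<and> g t \<le> 1"
    "\<And>B. B \<in> sets borel \<Longrightarrow>
      (\<integral>\<^sup>+\<omega>. F (\<lambda>j\<in>N. p j \<omega>) * indicator B (?H (kth_smallest (k i) ?C (\<lambda>j. p j \<omega>))) \<partial>M)
      = (\<integral>\<^sup>+\<omega>. ennreal (indicator B (?H (kth_smallest (k i) ?C (\<lambda>j. p j \<omega>)))
                     * g (?H (kth_smallest (k i) ?C (\<lambda>j. p j \<omega>)))) \<partial>M)"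
    by (rule exists_mono_regression_integrate_out[OF prob N S desc_closure_subset_null[OF E hierarchy i]
          v_facts(3,4)[OF \<open>i \<in> N\<close>] _ _ indep_null indep_nonnull F_measurable F_le_1 _
          mono_tilde_p_kth_smallest[where E=E and v=i and k=k and G=G, OF v_facts(2-5)[OF \<open>i \<in> N\<close>]]])
       (use rv unif F_mono in auto)
  have "F (\<lambda>j\<in>N. p j \<omega>) = indicator D (\<lambda>j\<in>N. tilde_p E G k j (\<lambda>l. p l \<omega>))" for \<omega>
  proof -
    have "tilde_p E G k j (\<lambda>l\<in>N. p l \<omega>) = tilde_p E G k j (\<lambda>l. p l \<omega>)" if "j \<in> N" for j
      using v_facts(1)[OF that] by (intro tilde_p_cong) auto
    then show ?thesis unfolding F_def by (simp cong: restrict_cong)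
  qed
  moreover have "tilde_p E G k i (\<lambda>l. p l \<omega>) = ?H (kth_smallest (k i) ?C (\<lambda>j. p j \<omega>))" for \<omega>
    by (simp add: tilde_p_eq_kth_smallest)
  ultimately show ?thesis
    using g by auto
qed

theorem theorem2:
  fixes M :: "'a measure" and n :: nat and p :: "nat \<Rightarrow> 'a \<Rightarrow> real"
    and Snull :: "nat set" and E :: "(nat \<times> nat) set"
    and G :: "nat \<Rightarrow> real \<Rightarrow> real" and k :: "nat \<Rightarrow> nat"
  assumes prob: "prob_space M"
    and dag_edges: "E \<subseteq> {..<n} \<times> {..<n}"
    and dag_acyclic: "acyclic E"
    and null_sub: "Snull \<subseteq> {..<n}"
    and hierarchy: "\<forall>v\<in>{..<n} - Snull. \<forall>w. (w, v) \<in> E\<^sup>+ \<longrightarrow> w \<notin> Snull"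
    and rv: "\<forall>v<n. p v \<in> borel_measurable M"
    and unif: "\<forall>v\<in>Snull. distr M borel (p v) = uniform_measure lborel {0..1::real}"
    and indep_null: "prob_space.indep_vars M (\<lambda>_. borel) p Snull"
    and indep_nonnull: "prob_space.indep_var M
          (PiM Snull (\<lambda>_. borel)) (\<lambda>\<omega>. \<lambda>v\<in>Snull. p v \<omega>)
          (PiM ({..<n} - Snull) (\<lambda>_. borel)) (\<lambda>\<omega>. \<lambda>v\<in>{..<n} - Snull. p v \<omega>)"
    and G_mono: "\<forall>v<n. mono (G v)"
    and k_range: "\<forall>v<n. 1 \<le> k v \<and> k v \<le> card (desc_closure E v)"
  shows "PRDS M {..<n} (\<lambda>v \<omega>. tilde_p E G k v (\<lambda>i. p i \<omega>)) Snull"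
proof -
  have "\<And>v. v \<in> {..<n} \<Longrightarrow> p v \<in> borel_measurable M" "\<And>v. v \<in> {..<n} \<Longrightarrow> mono (G v)"
    "\<And>v. v \<in> {..<n} \<Longrightarrow> 1 \<le> k v \<and> k v \<le> card (desc_closure E v)"
    "\<And>v. v \<in> Snull \<Longrightarrow> distr M borel (p v) = U01"
    using rv G_mono k_range unif by auto
  note hyps = prob finite_lessThan null_sub dag_edges hierarchy this(1,4) indep_null indep_nonnull this(2,3)
  show ?thesis
  proof (rule PRDS_I[OF prob _ null_sub])
    fix v assume "v \<in> {..<n}"
    then show "(\<lambda>\<omega>. tilde_p E G k v (\<lambda>i. p i \<omega>)) \<in> borel_measurable M"
      using desc_closure_subset[OF dag_edges, of v] k_range G_mono rv
      by (intro borel_measurable_tilde_p) (auto intro: finite_subset)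
  qed (rule exists_mono_regression_tilde_p[OF hyps])
qed

end
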